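(* Assume that $q$ is not a root of unity. Then the center $Z(\Delta)$ is generated (as an $\mathbb F$-algebra) by $\Omega,\alpha,\beta,\gamma$.
   Context: Let $\mathbb F$ be a field and fix a nonzero $q\in\mathbb F$ with $q^4\neq 1$. The universal Askey--Wilson algebra $\Delta$ is the associative $\mathbb F$-algebra with 1 with generators $A,B,C$ subject to the relations that each of $A+\frac{qBC-q^{-1}CB}{q^2-q^{-2}}$, $B+\frac{qCA-q^{-1}AC}{q^2-q^{-2}}$, $C+\frac{qAB-q^{-1}BA}{q^2-q^{-2}}$ is central; $\alpha,\beta,\gamma$ denote these three central elements (in order) each multiplied by $q+q^{-1}$. Let $\Omega = qABC+q^2A^2+q^{-2}B^2+q^2C^2-qA\alpha-q^{-1}B\beta-qC\gamma$. *)

theory Defs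
  imports Main
begin

text \<open>Free associative algebra over a field on generators A, B, C, represented as
  finitely supported functions from words to coefficients.\<close>

datatype gen = GA | GB | GC

type_synonym 'a ncpoly = "gen list \<Rightarrow> 'a"

definition fin :: "'a::zero ncpoly \<Rightarrow> bool" where
  "fin p \<longleftrightarrow> finite {w. p w \<noteq> 0}"

definition nc_add :: "'a::field ncpoly \<Rightarrow> 'a ncpoly \<Rightarrow> 'a ncpoly" (infixl "\<oplus>" 65) where
  "p \<oplus> q = (\<lambda>w. p w + q w)"

definition nc_diff :: "'a::field ncpoly \<Rightarrow> 'a ncpoly \<Rightarrow> 'a ncpoly" (infixl "\<ominus>" 65) where
  "p \<ominus> q = (\<lambda>w. p w - q w)"

definition nc_smult :: "'a::field \<Rightarrow> 'a ncpoly \<Rightarrow> 'a ncpoly" (infixr "\<cdot>" 75) where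
  "c \<cdot> p = (\<lambda>w. c * p w)"

definition nc_mult :: "'a::field ncpoly \<Rightarrow> 'a ncpoly \<Rightarrow> 'a ncpoly" (infixl "\<otimes>" 70) where
  "p \<otimes> q = (\<lambda>w. \<Sum>i\<le>length w. p (take i w) * q (drop i w))"

definition nc_zero :: "'a::field ncpoly" where
  "nc_zero = (\<lambda>w. 0)"

definition nc_one :: "'a::field ncpoly" where
  "nc_one = (\<lambda>w. if w = [] then 1 else 0)"

definition nc_var :: "gen \<Rightarrow> 'a::field ncpoly" where
  "nc_var g = (\<lambda>w. if w = [g] then 1 else 0)"

abbreviation "gA \<equiv> nc_var GA"
abbreviation "gB \<equiv> nc_var GB"
abbreviation "gC \<equiv> nc_var GC"

text \<open>The three elements required to be central in the universal Askey--Wilson algebra,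
  multiplied by q + q^{-1}: alpha, beta, gamma (as elements of the free algebra).\<close>

definition aw_alpha :: "'a::field \<Rightarrow> 'a ncpoly" where
  "aw_alpha q = (q + inverse q) \<cdot> (gA \<oplus> (inverse (q^2 - inverse (q^2))) \<cdot>
       ((q \<cdot> (gB \<otimes> gC)) \<ominus> (inverse q \<cdot> (gC \<otimes> gB))))"

definition aw_beta :: "'a::field \<Rightarrow> 'a ncpoly" where
  "aw_beta q = (q + inverse q) \<cdot> (gB \<oplus> (inverse (q^2 - inverse (q^2))) \<cdot>
       ((q \<cdot> (gC \<otimes> gA)) \<ominus> (inverse q \<cdot> (gA \<otimes> gC))))"

definition aw_gamma :: "'a::field \<Rightarrow> 'a ncpoly" where
  "aw_gamma q = (q + inverse q) \<cdot> (gC \<oplus> (inverse (q^2 - inverse (q^2))) \<cdot>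
       ((q \<cdot> (gA \<otimes> gB)) \<ominus> (inverse q \<cdot> (gB \<otimes> gA))))"

definition aw_Omega :: "'a::field \<Rightarrow> 'a ncpoly" where
  "aw_Omega q = (q \<cdot> (gA \<otimes> gB \<otimes> gC)) \<oplus> (q^2 \<cdot> (gA \<otimes> gA)) \<oplus> (inverse (q^2) \<cdot> (gB \<otimes> gB))
      \<oplus> (q^2 \<cdot> (gC \<otimes> gC)) \<ominus> (q \<cdot> (gA \<otimes> aw_alpha q)) \<ominus> (inverse q \<cdot> (gB \<otimes> aw_beta q))
      \<ominus> (q \<cdot> (gC \<otimes> aw_gamma q))"

text \<open>Two-sided ideal of the free algebra generated by the commutators of the elements
  alpha, beta, gamma with the generators; Delta is the free algebra modulo this ideal.\<close>
inductive_set aw_ideal :: "'a::field \<Rightarrow> 'a ncpoly set" for q :: "'a" where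
  rel: "X \<in> {aw_alpha q, aw_beta q, aw_gamma q} \<Longrightarrow> g \<in> {gA, gB, gC} \<Longrightarrow>
          (X \<otimes> g) \<ominus> (g \<otimes> X) \<in> aw_ideal q"
| zero: "nc_zero \<in> aw_ideal q"
| add: "x \<in> aw_ideal q \<Longrightarrow> y \<in> aw_ideal q \<Longrightarrow> x \<oplus> y \<in> aw_ideal q"
| lmult: "fin p \<Longrightarrow> x \<in> aw_ideal q \<Longrightarrow> p \<otimes> x \<in> aw_ideal q"
| rmult: "fin p \<Longrightarrow> x \<in> aw_ideal q \<Longrightarrow> x \<otimes> p \<in> aw_ideal q"

text \<open>Representatives (in the free algebra) of central elements of Delta.\<close>
definition aw_center :: "'a::field \<Rightarrow> 'a ncpoly set" where
  "aw_center q = {x. fin x \<and> (\<forall>y. fin y \<longrightarrow> (x \<otimes> y) \<ominus> (y \<otimes> x) \<in> aw_ideal q)}"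

inductive_set gen_subalg :: "'a::field \<Rightarrow> 'a ncpoly set" for q :: "'a" where
  scal: "c \<cdot> nc_one \<in> gen_subalg q"
| Om: "aw_Omega q \<in> gen_subalg q"
| al: "aw_alpha q \<in> gen_subalg q"
| be: "aw_beta q \<in> gen_subalg q"
| ga: "aw_gamma q \<in> gen_subalg q"
| add: "x \<in> gen_subalg q \<Longrightarrow> y \<in> gen_subalg q \<Longrightarrow> x \<oplus> y \<in> gen_subalg q"
| mult: "x \<in> gen_subalg q \<Longrightarrow> y \<in> gen_subalg q \<Longrightarrow> x \<otimes> y \<in> gen_subalg q"

end

theory Submission
  imports Defs "HOL-Library.Function_Algebras"
begin

text \<open>
  The proof constructs a faithful representation of \<open>\<Delta>\<close>. On the space of finitely supported
  functions on the PBW monomials \<open>A\<^sup>i B\<^sup>j C\<^sup>k \<alpha>\<^sup>r \<beta>\<^sup>s \<gamma>\<^sup>t\<close>, \<open>A\<close> acts by raising \<open>i\<close> and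
  \<open>\<alpha>, \<beta>, \<gamma>\<close> by raising \<open>r, s, t\<close>, while \<open>B\<close> and \<open>C\<close> are defined by recursion on the degree
  \<open>i + j + k\<close>, moving the new letter to its place with the reordering relations of \<open>\<Delta>\<close>.
  These operators satisfy the defining relations, so the representation kills the ideal;
  conversely every element is congruent to the combination of PBW monomials read off from
  its action on the vacuum vector. Hence an element lies in the ideal iff it kills the
  vacuum, and \<open>\<Omega>\<close> is central because its operator commutes with those of \<open>A, B, C\<close>.

  For a central \<open>x\<close>, comparing \<open>x A\<close> with \<open>A x\<close> and \<open>x C\<close> with \<open>C x\<close> on the vacuum shows
  that every top-degree monomial of \<open>x\<close> satisfies \<open>q\<^bsup>2(j-i)\<^esup> = q\<^bsup>2(j-k)\<^esup> = 1\<close>; as \<open>q\<close> is not a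
  root of unity it is \<open>A\<^sup>l B\<^sup>l C\<^sup>l \<alpha>\<^sup>r \<beta>\<^sup>s \<gamma>\<^sup>t\<close>, the leading monomial of \<open>\<Omega>\<^sup>l \<alpha>\<^sup>r \<beta>\<^sup>s \<gamma>\<^sup>t\<close>.
  Subtracting these elements lowers the degree, and induction on the degree concludes.
\<close>

section \<open>The free algebra\<close>

lemma nc_add_eq: "p \<oplus> q = p + q" by (auto simp: nc_add_def)

lemma nc_diff_eq: "p \<ominus> q = p - q" by (auto simp: nc_diff_def)

lemma nc_zero_eq: "nc_zero = 0" by (auto simp: nc_zero_def)

definition nc_word :: "gen list \<Rightarrow> 'a::field ncpoly" where
  "nc_word u = (\<lambda>w. if w = u then 1 else 0)"

lemma nc_var_eq_nc_word: "nc_var g = nc_word [g]" by (simp add: nc_var_def nc_word_def)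

lemma nc_one_eq_nc_word: "nc_one = nc_word []" by (simp add: nc_one_def nc_word_def)

lemma nc_mult_apply: "(p \<otimes> q) w = (\<Sum>i\<le>length w. p (take i w) * q (drop i w))"
  by (simp add: nc_mult_def)

lemma nc_word_mult_apply: "(nc_word u \<otimes> p) w = (if take (length u) w = u then p (drop (length u) w) else 0)"
proof -
  have "(nc_word u \<otimes> p) w = (\<Sum>i\<le>length w. (if take i w = u then p (drop i w) else 0))"
    by (auto simp: nc_mult_apply nc_word_def intro!: sum.cong)
  also have "\<dots> = (if take (length u) w = u then p (drop (length u) w) else 0)"
  proof (cases "take (length u) w = u")
    case True
    then have lu: "length u \<le> length w" by (metis length_take min.absorb_iff2 nat_le_linear take_all)
    have "(\<Sum>i\<le>length w. (if take i w = u then p (drop i w) else 0)) =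
          (\<Sum>i\<in>{length u}. (if take i w = u then p (drop i w) else 0))"
      by (rule sum.mono_neutral_right) (use lu in auto)
    then show ?thesis using True by simp
  next
    case False
    have "\<And>i. take i w = u \<Longrightarrow> False"
      using False by (metis length_take min.absorb_iff2 nat_le_linear take_all take_take)
    then show ?thesis using False by (auto intro!: sum.neutral)
  qed
  finally show ?thesis .
qed

lemma nc_mult_word_apply: "(p \<otimes> nc_word u) w = (if drop (length w - length u) w = u then p (take (length w - length u) w) else 0)"
proof -
  have "(p \<otimes> nc_word u) w = (\<Sum>i\<le>length w. (if drop i w = u then p (take i w) else 0))"
    by (simp add: nc_mult_apply nc_word_def if_distrib cong: if_cong)
  also have "\<dots> = (if drop (length w - length u) w = u then p (take (length w - length u) w) else 0)"
  proof (cases "drop (length w - length u) w = u")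
    case True
    have "(\<Sum>i\<le>length w. (if drop i w = u then p (take i w) else 0)) =
          (\<Sum>i\<in>{length w - length u}. (if drop i w = u then p (take i w) else 0))"
      by (rule sum.mono_neutral_right) (use True in auto)
    then show ?thesis using True by simp
  next
    case False
    have "\<And>i. i \<le> length w \<Longrightarrow> drop i w = u \<Longrightarrow> False"
      using False by (metis diff_diff_cancel length_drop)
    then show ?thesis using False by (auto intro!: sum.neutral)
  qed
  finally show ?thesis .
qed

lemma nc_word_mult_nc_word: "nc_word u \<otimes> nc_word v = nc_word (u @ v)"
  by (rule ext) (auto simp add: nc_word_mult_apply append_eq_conv_conj simp del: nc_word_def, auto simp: nc_word_def,
    metis append_take_drop_id)

lemma nc_mult_assoc: "(p \<otimes> q) \<otimes> r = p \<otimes> (q \<otimes> r)"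
proof (rule ext)
  fix w :: "gen list"
  define n where "n = length w"
  define g where "g = (\<lambda>j l. p (take j w) * q (take l (drop j w)) * r (drop (j + l) w))"
  have "((p \<otimes> q) \<otimes> r) w = (\<Sum>k\<le>n. \<Sum>j\<le>k. g j (k - j))"
    unfolding nc_mult_apply n_def g_def
    by (auto simp: sum_distrib_right min_def take_drop intro!: sum.cong)
  also have "\<dots> = (\<Sum>(j,l)\<in>{(j,l). j + l \<le> n}. g j l)"
    by (rule sum.triangle_reindex_eq[symmetric])
  also have "{(j,l). j + l \<le> n} = Sigma {..n} (\<lambda>j. {..n - j})" by auto
  also have "(\<Sum>(j,l)\<in>Sigma {..n} (\<lambda>j. {..n - j}). g j l) = (\<Sum>j\<le>n. \<Sum>l\<le>n - j. g j l)"
    by (rule sum.Sigma[symmetric]) auto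
  also have "\<dots> = (p \<otimes> (q \<otimes> r)) w"
    unfolding nc_mult_apply n_def g_def
    by (auto simp: sum_distrib_left mult.assoc add.commute intro!: sum.cong)
  finally show "((p \<otimes> q) \<otimes> r) w = (p \<otimes> (q \<otimes> r)) w" .
qed

lemma sum_fun_apply: "(sum f S) x = (\<Sum>i\<in>S. f i x)"
  by (induction S rule: infinite_finite_induct) auto

lemma nc_smult_apply: "(c \<cdot> p) w = c * p w" by (simp add: nc_smult_def)

lemma nc_mult_add_left: "(p + q) \<otimes> r = p \<otimes> r + q \<otimes> r"
  by (rule ext) (simp add: nc_mult_apply distrib_right sum.distrib)

lemma nc_mult_add_right: "r \<otimes> (p + q) = r \<otimes> p + r \<otimes> q"
  by (rule ext) (simp add: nc_mult_apply distrib_left sum.distrib)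

lemma nc_mult_diff_left: "(p - q) \<otimes> r = p \<otimes> r - q \<otimes> r"
  by (rule ext) (simp add: nc_mult_apply left_diff_distrib sum_subtractf)

lemma nc_mult_diff_right: "r \<otimes> (p - q) = r \<otimes> p - r \<otimes> q"
  by (rule ext) (simp add: nc_mult_apply right_diff_distrib sum_subtractf)

lemma nc_mult_smult_left: "(c \<cdot> p) \<otimes> r = c \<cdot> (p \<otimes> r)"
  by (rule ext) (simp add: nc_mult_apply nc_smult_apply sum_distrib_left mult.assoc)

lemma nc_mult_smult_right: "r \<otimes> (c \<cdot> p) = c \<cdot> (r \<otimes> p)"
  by (rule ext) (simp add: nc_mult_apply nc_smult_apply sum_distrib_left mult.left_commute)

lemma nc_mult_zero_left: "0 \<otimes> r = 0"
  by (rule ext) (simp add: nc_mult_apply)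

lemma nc_mult_zero_right: "r \<otimes> 0 = 0"
  by (rule ext) (simp add: nc_mult_apply)

lemma nc_mult_zero_fun_left: "(\<lambda>a. 0) \<otimes> r = (\<lambda>a. 0)"
  by (rule ext) (simp add: nc_mult_apply)

lemma nc_mult_zero_fun_right: "r \<otimes> (\<lambda>a. 0) = (\<lambda>a. 0)"
  by (rule ext) (simp add: nc_mult_apply)

lemma nc_mult_sum_left: "(sum f S) \<otimes> r = (\<Sum>i\<in>S. f i \<otimes> r)"
proof (induction S rule: infinite_finite_induct)
  case (insert x F) then show ?case by (metis nc_mult_add_left sum.insert)
qed (simp_all add: nc_mult_zero_left nc_mult_zero_fun_left)

lemma nc_mult_sum_right: "r \<otimes> (sum f S) = (\<Sum>i\<in>S. r \<otimes> f i)"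
proof (induction S rule: infinite_finite_induct)
  case (insert x F) then show ?case by (metis nc_mult_add_right sum.insert)
qed (simp_all add: nc_mult_zero_right nc_mult_zero_fun_right)

lemma nc_mult_one_left: "nc_one \<otimes> p = p"
  by (rule ext) (simp add: nc_one_eq_nc_word nc_word_mult_apply)

lemma nc_mult_one_right: "p \<otimes> nc_one = p"
  by (rule ext) (simp add: nc_one_eq_nc_word nc_mult_word_apply)

lemma nc_smult_diff: "c \<cdot> (p - q) = c \<cdot> p - c \<cdot> q"
  by (rule ext) (simp add: nc_smult_apply right_diff_distrib)

lemma nc_smult_smult: "c \<cdot> (d \<cdot> p) = (c * d) \<cdot> p"
  by (rule ext) (simp add: nc_smult_apply)

lemma nc_smult_one: "1 \<cdot> p = p"
  by (rule ext) (simp add: nc_smult_apply)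

lemma nc_smult_zero: "0 \<cdot> p = 0"
  by (rule ext) (simp add: nc_smult_apply)

lemma nc_smult_sum: "c \<cdot> (sum f S) = (\<Sum>i\<in>S. c \<cdot> f i)"
  by (rule ext) (simp add: nc_smult_apply sum_fun_apply sum_distrib_left)

lemma nc_add_smult: "(c + d) \<cdot> p = c \<cdot> p + d \<cdot> p"
  by (rule ext) (simp add: nc_smult_apply distrib_right)

lemma nc_smult_minus_one: "(-1) \<cdot> p = - p"
  by (rule ext) (simp add: nc_smult_apply)

lemma fin_zero[simp]: "fin (0::'a::field ncpoly)" by (simp add: fin_def)

lemma fin_add[simp]: "fin p \<Longrightarrow> fin q \<Longrightarrow> fin (p + (q::'a::field ncpoly))"
  unfolding fin_def by (rule finite_subset[of _ "{w. p w \<noteq> 0} \<union> {w. q w \<noteq> 0}"]) auto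


lemma fin_diff[simp]: "fin p \<Longrightarrow> fin q \<Longrightarrow> fin (p - (q::'a::field ncpoly))"
  unfolding fin_def by (rule finite_subset[of _ "{w. p w \<noteq> 0} \<union> {w. q w \<noteq> 0}"]) auto

lemma fin_smult[simp]: "fin p \<Longrightarrow> fin (c \<cdot> p)"
  unfolding fin_def by (rule finite_subset[of _ "{w. p w \<noteq> 0}"]) (auto simp: nc_smult_apply)

lemma fin_nc_word[simp]: "fin (nc_word u)" by (simp add: fin_def nc_word_def)

lemma fin_var[simp]: "fin (nc_var g)" by (simp add: nc_var_eq_nc_word)

lemma fin_one[simp]: "fin nc_one" by (simp add: nc_one_eq_nc_word)

lemma fin_sum[simp]: "(\<And>i. i \<in> S \<Longrightarrow> fin (f i)) \<Longrightarrow> fin (sum f S :: 'a::field ncpoly)"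
  by (induction S rule: infinite_finite_induct) auto

lemma fin_mult[simp]: assumes "fin p" "fin q" shows "fin (p \<otimes> q)"
proof -
  have "{w. (p \<otimes> q) w \<noteq> 0} \<subseteq> (\<lambda>(u,v). u @ v) ` ({w. p w \<noteq> 0} \<times> {w. q w \<noteq> 0})"
  proof
    fix w assume "w \<in> {w. (p \<otimes> q) w \<noteq> 0}"
    then obtain i where "p (take i w) * q (drop i w) \<noteq> 0"
      by (auto simp: nc_mult_apply elim: sum.not_neutral_contains_not_neutral)
    then show "w \<in> (\<lambda>(u,v). u @ v) ` ({w. p w \<noteq> 0} \<times> {w. q w \<noteq> 0})"
      by (auto intro!: image_eqI[of _ _ "(take i w, drop i w)"])
  qed
  moreover have "finite ((\<lambda>(u,v). u @ v) ` ({w. p w \<noteq> 0} \<times> {w. q w \<noteq> 0}))"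
    using assms unfolding fin_def by auto
  ultimately show ?thesis unfolding fin_def by (rule finite_subset)
qed

lemma nc_poly_decomp: assumes "fin p" shows "p = (\<Sum>w\<in>{w. p w \<noteq> 0}. p w \<cdot> nc_word w)"
proof (rule ext)
  fix u
  have "(\<Sum>w\<in>{w. p w \<noteq> 0}. p w \<cdot> nc_word w) u = (\<Sum>w\<in>{w. p w \<noteq> 0}. if w = u then p w else 0)"
    by (auto simp: sum_fun_apply nc_smult_apply nc_word_def intro!: sum.cong)
  also have "\<dots> = p u" using assms by (simp add: fin_def sum.delta')
  finally show "p u = (\<Sum>w\<in>{w. p w \<noteq> 0}. p w \<cdot> nc_word w) u" by simp
qed

lemma nc_var_mult_nc_word: "nc_var g \<otimes> nc_word w = nc_word (g # w)"
  by (simp add: nc_var_eq_nc_word nc_word_mult_nc_word)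

fun nc_pow :: "'a::field ncpoly \<Rightarrow> nat \<Rightarrow> 'a ncpoly" where
  "nc_pow p 0 = nc_one" | "nc_pow p (Suc n) = p \<otimes> nc_pow p n"

lemma fin_nc_pow[simp]: "fin p \<Longrightarrow> fin (nc_pow p n)" by (induction n) auto

section \<open>The defining ideal and central elements\<close>

declare nc_add_eq[simp] nc_diff_eq[simp] nc_zero_eq[simp]

lemma fin_alpha[simp]: "fin (aw_alpha q)" by (simp add: aw_alpha_def)

lemma fin_beta[simp]: "fin (aw_beta q)" by (simp add: aw_beta_def)

lemma fin_gamma[simp]: "fin (aw_gamma q)" by (simp add: aw_gamma_def)

lemma fin_Omega[simp]: "fin (aw_Omega q)" by (simp add: aw_Omega_def)

lemma aw_ideal_fin: "x \<in> aw_ideal q \<Longrightarrow> fin x"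
proof (induction rule: aw_ideal.induct)
  case (rel X g)
  then have "fin X" "fin g" by auto
  then show ?case by (simp only: nc_diff_eq fin_diff fin_mult)
qed (simp_all only: nc_add_eq nc_zero_eq fin_add fin_mult fin_zero)

lemma aw_ideal_zero[simp]: "0 \<in> aw_ideal q"
  using aw_ideal.zero by simp

lemma aw_ideal_add: "x \<in> aw_ideal q \<Longrightarrow> y \<in> aw_ideal q \<Longrightarrow> x + y \<in> aw_ideal q"
  using aw_ideal.add by simp

lemma aw_ideal_lmult: "fin p \<Longrightarrow> x \<in> aw_ideal q \<Longrightarrow> p \<otimes> x \<in> aw_ideal q"
  by (rule aw_ideal.lmult)

lemma aw_ideal_rmult: "fin p \<Longrightarrow> x \<in> aw_ideal q \<Longrightarrow> x \<otimes> p \<in> aw_ideal q"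
  by (rule aw_ideal.rmult)

lemma aw_ideal_smult: "x \<in> aw_ideal q \<Longrightarrow> c \<cdot> x \<in> aw_ideal q"
proof -
  assume "x \<in> aw_ideal q"
  then have "(c \<cdot> nc_one) \<otimes> x \<in> aw_ideal q" by (intro aw_ideal_lmult) auto
  then show ?thesis by (simp add: nc_mult_smult_left nc_mult_one_left)
qed

lemma aw_ideal_neg: "x \<in> aw_ideal q \<Longrightarrow> - x \<in> aw_ideal q"
  using aw_ideal_smult[of x q "-1"] by (simp add: nc_smult_minus_one)

lemma aw_ideal_diff: "x \<in> aw_ideal q \<Longrightarrow> y \<in> aw_ideal q \<Longrightarrow> x - y \<in> aw_ideal q"
  using aw_ideal_add[OF _ aw_ideal_neg] by (metis diff_conv_add_uminus)

lemma aw_ideal_sum: "(\<And>i. i \<in> S \<Longrightarrow> f i \<in> aw_ideal q) \<Longrightarrow> sum f S \<in> aw_ideal q"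
  by (induction S rule: infinite_finite_induct) (auto intro: aw_ideal_add)

definition eqv :: "'a::field \<Rightarrow> 'a ncpoly \<Rightarrow> 'a ncpoly \<Rightarrow> bool" where
  "eqv q x y \<longleftrightarrow> x - y \<in> aw_ideal q"

lemma eqv_refl: "eqv q x x" by (simp add: eqv_def)

lemma eqv_trans: "eqv q x y \<Longrightarrow> eqv q y z \<Longrightarrow> eqv q x z"
  unfolding eqv_def by (drule (1) aw_ideal_add) simp

lemma eqv_add: "eqv q x y \<Longrightarrow> eqv q x' y' \<Longrightarrow> eqv q (x + x') (y + y')"
  unfolding eqv_def by (drule (1) aw_ideal_add) (simp add: algebra_simps)

lemma eqv_diff: "eqv q x y \<Longrightarrow> eqv q x' y' \<Longrightarrow> eqv q (x - x') (y - y')"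
  unfolding eqv_def by (drule (1) aw_ideal_diff) (simp add: algebra_simps)

lemma eqv_smult: "eqv q x y \<Longrightarrow> eqv q (c \<cdot> x) (c \<cdot> y)"
  unfolding eqv_def by (drule aw_ideal_smult[where c=c]) (simp add: nc_smult_diff)

lemma eqv_lmult: "fin p \<Longrightarrow> eqv q x y \<Longrightarrow> eqv q (p \<otimes> x) (p \<otimes> y)"
  unfolding eqv_def by (drule (1) aw_ideal_lmult) (simp add: nc_mult_diff_right)

lemma eqv_rmult: "fin p \<Longrightarrow> eqv q x y \<Longrightarrow> eqv q (x \<otimes> p) (y \<otimes> p)"
  unfolding eqv_def by (drule (1) aw_ideal_rmult) (simp add: nc_mult_diff_left)

lemma eqv_sum: "(\<And>i. i \<in> S \<Longrightarrow> eqv q (f i) (g i)) \<Longrightarrow> eqv q (sum f S) (sum g S)"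
  unfolding eqv_def by (drule aw_ideal_sum) (simp add: sum_subtractf)

lemma eqv_eq: "x = y \<Longrightarrow> eqv q x y" by (simp add: eqv_refl)

definition commutes :: "'a::field \<Rightarrow> 'a ncpoly \<Rightarrow> 'a ncpoly \<Rightarrow> bool" where
  "commutes q x y \<longleftrightarrow> eqv q (x \<otimes> y) (y \<otimes> x)"

lemma commutes_nc_word:
  assumes fx: "fin x" and g: "\<And>g. commutes q x (nc_var g)"
  shows "commutes q x (nc_word w)"
proof (induction w)
  case Nil
  then show ?case by (simp add: commutes_def eqv_refl flip: nc_one_eq_nc_word add: nc_mult_one_left nc_mult_one_right)
next
  case (Cons a w)
  have "x \<otimes> nc_word (a # w) = (x \<otimes> nc_var a) \<otimes> nc_word w"
    by (simp add: nc_mult_assoc nc_var_mult_nc_word)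
  moreover have "nc_word (a # w) \<otimes> x = nc_var a \<otimes> (nc_word w \<otimes> x)"
    by (simp flip: nc_mult_assoc add: nc_var_mult_nc_word)
  moreover have "eqv q ((x \<otimes> nc_var a) \<otimes> nc_word w) ((nc_var a \<otimes> x) \<otimes> nc_word w)"
    using g[of a] by (auto simp: commutes_def intro: eqv_rmult)
  moreover have "eqv q (nc_var a \<otimes> (x \<otimes> nc_word w)) (nc_var a \<otimes> (nc_word w \<otimes> x))"
    using Cons by (auto simp: commutes_def intro: eqv_lmult)
  ultimately show ?case unfolding commutes_def by (metis eqv_trans nc_mult_assoc)
qed

lemma commutes_fin:
  assumes fx: "fin x" and g: "\<And>g. commutes q x (nc_var g)" and fy: "fin y"
  shows "commutes q x y"
proof -
  let ?S = "{w. y w \<noteq> 0}"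
  have y: "y = (\<Sum>w\<in>?S. y w \<cdot> nc_word w)" using nc_poly_decomp[OF fy] .
  have "eqv q (\<Sum>w\<in>?S. x \<otimes> (y w \<cdot> nc_word w)) (\<Sum>w\<in>?S. (y w \<cdot> nc_word w) \<otimes> x)"
    using commutes_nc_word[OF fx g] 
    by (auto intro!: eqv_sum simp: nc_mult_smult_left nc_mult_smult_right commutes_def intro: eqv_smult)
  then show ?thesis unfolding commutes_def
    by (subst (1 2) y) (simp add: nc_mult_sum_left nc_mult_sum_right)
qed

lemma aw_centerI:
  assumes "fin x" "\<And>g. commutes q x (nc_var g)"
  shows "x \<in> aw_center q"
  using commutes_fin[OF assms] assms(1) unfolding aw_center_def commutes_def eqv_def by auto

lemma aw_center_commutes: "x \<in> aw_center q \<Longrightarrow> fin y \<Longrightarrow> commutes q x y"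
  unfolding aw_center_def commutes_def eqv_def by auto

lemma aw_center_fin: "x \<in> aw_center q \<Longrightarrow> fin x"
  unfolding aw_center_def by auto

lemma aw_center_add: assumes "x \<in> aw_center q" "y \<in> aw_center q" shows "x + y \<in> aw_center q"
proof (rule aw_centerI)
  show "fin (x + y)" using assms by (simp add: aw_center_fin)
  fix g
  have "eqv q (x \<otimes> nc_var g) (nc_var g \<otimes> x)" "eqv q (y \<otimes> nc_var g) (nc_var g \<otimes> y)"
    using assms by (auto intro!: aw_center_commutes[unfolded commutes_def])
  then show "commutes q (x + y) (nc_var g)"
    unfolding commutes_def by (simp add: nc_mult_add_left nc_mult_add_right eqv_add)
qed

lemma aw_center_mult: assumes "x \<in> aw_center q" "y \<in> aw_center q" shows "x \<otimes> y \<in> aw_center q"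
proof (rule aw_centerI)
  show "fin (x \<otimes> y)" using assms by (simp add: aw_center_fin)
  fix g
  have "eqv q (x \<otimes> (y \<otimes> nc_var g)) (x \<otimes> (nc_var g \<otimes> y))"
    using assms by (auto intro!: eqv_lmult aw_center_commutes[unfolded commutes_def] simp: aw_center_fin)
  moreover have "eqv q ((x \<otimes> nc_var g) \<otimes> y) ((nc_var g \<otimes> x) \<otimes> y)"
    using assms by (auto intro!: eqv_rmult aw_center_commutes[unfolded commutes_def] simp: aw_center_fin)
  ultimately show "commutes q (x \<otimes> y) (nc_var g)"
    unfolding commutes_def by (metis eqv_trans nc_mult_assoc)
qed

lemma aw_center_scalar: "c \<cdot> nc_one \<in> aw_center q"
  by (rule aw_centerI) (auto simp: commutes_def nc_mult_smult_left nc_mult_smult_right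
      nc_mult_one_left nc_mult_one_right eqv_refl)

lemma aw_ideal_rel: "X \<in> {aw_alpha q, aw_beta q, aw_gamma q} \<Longrightarrow> g \<in> {gA, gB, gC} \<Longrightarrow>
          (X \<otimes> g) - (g \<otimes> X) \<in> aw_ideal q"
  using aw_ideal.rel by (metis nc_diff_eq)

lemma nc_var_cases: "nc_var g \<in> {gA, gB, gC}" by (cases g) auto

lemma aw_center_alpha: "aw_alpha q \<in> aw_center q"
  by (rule aw_centerI) (auto simp: commutes_def eqv_def intro!: aw_ideal_rel nc_var_cases)

lemma aw_center_beta: "aw_beta q \<in> aw_center q"
  by (rule aw_centerI) (auto simp: commutes_def eqv_def intro!: aw_ideal_rel nc_var_cases)

lemma aw_center_gamma: "aw_gamma q \<in> aw_center q"
  by (rule aw_centerI) (auto simp: commutes_def eqv_def intro!: aw_ideal_rel nc_var_cases)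

lemma gen_subalg_in_center: assumes "aw_Omega q \<in> aw_center q" shows "s \<in> gen_subalg q \<Longrightarrow> s \<in> aw_center q"
proof (induction rule: gen_subalg.induct)
  case (add x y) then show ?case by (metis nc_add_eq aw_center_add)
qed (auto simp: assms aw_center_alpha aw_center_beta aw_center_gamma aw_center_scalar aw_center_mult)

lemma gen_subalg_smult: "y \<in> gen_subalg q \<Longrightarrow> c \<cdot> y \<in> gen_subalg q"
proof -
  assume y: "y \<in> gen_subalg q"
  have "(c \<cdot> nc_one) \<otimes> y \<in> gen_subalg q" using y by (intro gen_subalg.mult gen_subalg.scal)
  then show ?thesis by (simp add: nc_mult_smult_left nc_mult_one_left)
qed

lemma gen_subalg_zero: "0 \<in> gen_subalg q"
  using gen_subalg.scal[of 0 q] by (simp add: nc_smult_zero)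

lemma gen_subalg_add: "x \<in> gen_subalg q \<Longrightarrow> y \<in> gen_subalg q \<Longrightarrow> x + y \<in> gen_subalg q"
  using gen_subalg.add by (metis nc_add_eq)

lemma gen_subalg_sum: "(\<And>i. i \<in> S \<Longrightarrow> f i \<in> gen_subalg q) \<Longrightarrow> sum f S \<in> gen_subalg q"
  by (induction S rule: infinite_finite_induct) (auto simp: gen_subalg_zero gen_subalg_add)

lemma gen_subalg_nc_pow: "p \<in> gen_subalg q \<Longrightarrow> nc_pow p n \<in> gen_subalg q"
proof (induction n)
  case 0 then show ?case using gen_subalg.scal[of 1 q] by (simp add: nc_smult_one)
next
  case (Suc n) then show ?case by (simp add: gen_subalg.mult)
qed

lemma aw_ideal_center: assumes x: "x \<in> aw_ideal q" shows "x \<in> aw_center q"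
proof -
  have "\<And>y. fin y \<Longrightarrow> x \<otimes> y - y \<otimes> x \<in> aw_ideal q"
    using x by (intro aw_ideal_diff aw_ideal_lmult aw_ideal_rmult)
  then show ?thesis using aw_ideal_fin[OF x] unfolding aw_center_def by simp
qed

lemma aw_center_smult: "x \<in> aw_center q \<Longrightarrow> c \<cdot> x \<in> aw_center q"
  using aw_center_mult[OF aw_center_scalar] by (metis nc_mult_smult_left nc_mult_one_left)

lemma aw_center_diff: "x \<in> aw_center q \<Longrightarrow> y \<in> aw_center q \<Longrightarrow> x - y \<in> aw_center q"
  using aw_center_add[OF _ aw_center_smult[where x=y and c="-1"]] by (simp add: nc_smult_minus_one)

section \<open>Finitely supported vectors on PBW monomials\<close>

text \<open>\<open>Mon i j k r s t\<close> stands for the PBW monomial \<open>A\<^sup>i B\<^sup>j C\<^sup>k \<alpha>\<^sup>r \<beta>\<^sup>s \<gamma>\<^sup>t\<close>.\<close>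

datatype mon = Mon nat nat nat nat nat nat

fun deg :: "mon \<Rightarrow> nat" where "deg (Mon i j k r s t) = i + j + k"

fun exp_A :: "mon \<Rightarrow> nat" where "exp_A (Mon i j k r s t) = i"

type_synonym 'a vec = "mon \<Rightarrow> 'a"

definition vfin :: "'a::field vec \<Rightarrow> bool" where "vfin v \<longleftrightarrow> finite {m. v m \<noteq> 0}"

definition unit_vec :: "mon \<Rightarrow> 'a::field vec" where "unit_vec m = (\<lambda>m'. if m' = m then 1 else 0)"

abbreviation vacuum :: "'a::field vec" where "vacuum \<equiv> unit_vec (Mon 0 0 0 0 0 0)"

definition vscale :: "'a::field \<Rightarrow> 'a vec \<Rightarrow> 'a vec" where "vscale c v = (\<lambda>m. c * v m)"

definition extend :: "(mon \<Rightarrow> 'a::field vec) \<Rightarrow> 'a vec \<Rightarrow> 'a vec" where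
  "extend f v = (\<lambda>m'. \<Sum>m\<in>{m. v m \<noteq> 0}. v m * f m m')"

fun succA :: "mon \<Rightarrow> mon" where "succA (Mon i j k r s t) = Mon (Suc i) j k r s t"

definition push :: "(mon \<Rightarrow> mon) \<Rightarrow> 'a::field vec \<Rightarrow> 'a vec" where
  "push f v = (\<lambda>m. if m \<in> range f then v (the_inv f m) else 0)"

lemma inj_succA: "inj succA" by (rule injI) (case_tac x; case_tac y; simp) 

lemma push_apply: "inj f \<Longrightarrow> push f v (f m) = v m"
  by (simp add: push_def the_inv_f_f)

lemma push_apply_notin: "m \<notin> range f \<Longrightarrow> push f v m = 0"
  by (simp add: push_def)

lemma vfin_unit_vec[simp]: "vfin (unit_vec m)" by (simp add: vfin_def unit_vec_def)

lemma vfin_zero[simp]: "vfin 0" by (simp add: vfin_def)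

lemma vfin_add[simp]: "vfin u \<Longrightarrow> vfin w \<Longrightarrow> vfin (u + w :: 'a::field vec)"
  unfolding vfin_def by (rule finite_subset[of _ "{m. u m \<noteq> 0} \<union> {m. w m \<noteq> 0}"]) auto

lemma vfin_diff[simp]: "vfin u \<Longrightarrow> vfin w \<Longrightarrow> vfin (u - (w :: 'a::field vec))"
  unfolding vfin_def by (rule finite_subset[of _ "{m. u m \<noteq> 0} \<union> {m. w m \<noteq> 0}"]) auto

lemma vfin_vscale[simp]: "vfin u \<Longrightarrow> vfin (vscale c (u :: 'a::field vec))"
  unfolding vfin_def vscale_def by (rule finite_subset[of _ "{m. u m \<noteq> 0}"]) auto

lemma vfin_sum[simp]: "(\<And>i. i \<in> S \<Longrightarrow> vfin (f i)) \<Longrightarrow> vfin (sum f S :: 'a::field vec)"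
  by (induction S rule: infinite_finite_induct) auto

lemma vfin_push[simp]: assumes "inj f" "vfin v" shows "vfin (push f v)"
proof -
  have "{m. push f v m \<noteq> 0} \<subseteq> f ` {m. v m \<noteq> 0}"
    by (auto simp: push_def f_the_inv_into_f[OF assms(1)] intro!: image_eqI[of _ f "the_inv f _"])
  then show ?thesis using assms unfolding vfin_def by (meson finite_imageI finite_subset)
qed

lemma vscale_apply: "vscale c v m = c * v m" by (simp add: vscale_def)

lemma extend_sum: assumes "vfin v" "{m. v m \<noteq> 0} \<subseteq> S" "finite S"
  shows "extend f v = (\<Sum>m\<in>S. vscale (v m) (f m))"
proof (rule ext)
  fix m'
  have "extend f v m' = (\<Sum>m\<in>S. v m * f m m')"
    unfolding extend_def by (rule sum.mono_neutral_left) (use assms in auto)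
  then show "extend f v m' = (\<Sum>m\<in>S. vscale (v m) (f m)) m'" by (simp add: sum_fun_apply vscale_apply)
qed

lemma extend_unit_vec[simp]: "extend f (unit_vec m) = f m"
  by (rule ext) (simp add: extend_def unit_vec_def)

lemma vec_decomp: assumes "vfin v" shows "v = (\<Sum>m\<in>{m. v m \<noteq> 0}. vscale (v m) (unit_vec m))"
proof (rule ext)
  fix m'
  show "v m' = (\<Sum>m\<in>{m. v m \<noteq> 0}. vscale (v m) (unit_vec m)) m'"
  proof -
    have "(\<Sum>m\<in>{m. v m \<noteq> 0}. vscale (v m) (unit_vec m)) m' = (\<Sum>m\<in>{m. v m \<noteq> 0}. if m' = m then v m else 0)"
      by (auto simp: sum_fun_apply vscale_apply unit_vec_def intro!: sum.cong)
    also have "\<dots> = v m'" using assms by (simp add: vfin_def sum.delta)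
    finally show ?thesis by simp
  qed
qed

definition lin :: "('a::field vec \<Rightarrow> 'a vec) \<Rightarrow> bool" where
  "lin L \<longleftrightarrow> (\<forall>u w. vfin u \<longrightarrow> vfin w \<longrightarrow> L (u + w) = L u + L w) \<and>
             (\<forall>c u. vfin u \<longrightarrow> L (vscale c u) = vscale c (L u)) \<and> (\<forall>u. vfin u \<longrightarrow> vfin (L u))"

lemma lin_add: "lin L \<Longrightarrow> vfin u \<Longrightarrow> vfin w \<Longrightarrow> L (u + w) = L u + L w"
  by (simp add: lin_def)

lemma lin_vscale: "lin L \<Longrightarrow> vfin u \<Longrightarrow> L (vscale c u) = vscale c (L u)"
  by (simp add: lin_def)

lemma lin_vfin: "lin L \<Longrightarrow> vfin u \<Longrightarrow> vfin (L u)"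
  by (simp add: lin_def)

lemma vscale_zero: "vscale 0 (u::'a::field vec) = 0" by (rule ext) (simp add: vscale_apply)

lemma lin_zero: "lin L \<Longrightarrow> L 0 = 0"
  using lin_vscale[of L 0 0] by (simp add: vscale_zero)

lemma lin_sum: "lin L \<Longrightarrow> (\<And>i. i \<in> S \<Longrightarrow> vfin (f i)) \<Longrightarrow> L (sum f S) = (\<Sum>i\<in>S. L (f i))"
  by (induction S rule: infinite_finite_induct) (auto simp: lin_zero lin_add)

lemma lin_diff: "lin L \<Longrightarrow> vfin u \<Longrightarrow> vfin w \<Longrightarrow> L (u - w) = L u - L w"
proof -
  assume a: "lin L" "vfin u" "vfin w"
  have "L u = L ((u - w) + w)" by simp
  also have "\<dots> = L (u - w) + L w" using lin_add[OF a(1) vfin_diff[OF a(2,3)] a(3)] .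
  finally show ?thesis by simp
qed

lemma lin_eqI: assumes "lin L" "lin L'" "\<And>m. L (unit_vec m) = L' (unit_vec m)" "vfin v"
  shows "L v = L' v"
proof -
  have "L v = L (\<Sum>m\<in>{m. v m \<noteq> 0}. vscale (v m) (unit_vec m))" using vec_decomp[OF assms(4)] by simp
  also have "\<dots> = (\<Sum>m\<in>{m. v m \<noteq> 0}. vscale (v m) (L (unit_vec m)))"
    using assms(1) by (simp add: lin_sum lin_vscale)
  also have "\<dots> = (\<Sum>m\<in>{m. v m \<noteq> 0}. vscale (v m) (L' (unit_vec m)))" using assms(3) by simp
  also have "\<dots> = L' (\<Sum>m\<in>{m. v m \<noteq> 0}. vscale (v m) (unit_vec m))"
    using assms(2) by (simp add: lin_sum lin_vscale)
  also have "\<dots> = L' v" using vec_decomp[OF assms(4)] by simp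
  finally show ?thesis .
qed

lemma lin_extend: assumes "\<And>m. vfin (f m)" shows "lin (extend f)"
proof -
  have fin: "vfin (extend f u)" if "vfin u" for u
    using that assms by (simp add: extend_sum[OF that subset_refl] vfin_def[of u])
  have add: "extend f (u + w) = extend f u + extend f w" if "vfin u" "vfin w" for u w
  proof -
    let ?S = "{m. u m \<noteq> 0} \<union> {m. w m \<noteq> 0}"
    have "finite ?S" using that by (simp add: vfin_def)
    then show ?thesis using that
      by (subst (1 2 3) extend_sum[where S="?S"]) (auto simp: sum_fun_apply sum.distrib[symmetric]
          vscale_def fun_eq_iff distrib_right)
  qed
  have vscale: "extend f (vscale c u) = vscale c (extend f u)" if "vfin u" for c u
  proof -
    let ?S = "{m. u m \<noteq> 0}"
    have "finite ?S" using that by (simp add: vfin_def)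
    have "extend f (vscale c u) = (\<Sum>m\<in>?S. vscale (vscale c u m) (f m))"
      by (rule extend_sum) (use that \<open>finite ?S\<close> in \<open>auto simp: vscale_apply\<close>)
    moreover have "extend f u = (\<Sum>m\<in>?S. vscale (u m) (f m))"
      by (rule extend_sum) (use that \<open>finite ?S\<close> in auto)
    ultimately show ?thesis
      by (auto simp: vscale_def fun_eq_iff sum_fun_apply sum_distrib_left mult.assoc)
  qed
  show ?thesis using fin add vscale by (simp add: lin_def)
qed

lemma lin_push: assumes "inj f" shows "lin (push f)"
  using assms unfolding lin_def
  by (auto simp: vfin_push) (auto simp: push_def vscale_def fun_eq_iff)

lemma push_unit_vec: "inj f \<Longrightarrow> push f (unit_vec m) = unit_vec (f m)"
  by (rule ext) (auto simp: push_def unit_vec_def the_inv_f_f f_the_inv_into_f)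

abbreviation "opA \<equiv> push succA"

definition deg_le :: "nat \<Rightarrow> 'a::field vec \<Rightarrow> bool" where
  "deg_le n v \<longleftrightarrow> (\<forall>m. v m \<noteq> 0 \<longrightarrow> deg m \<le> n)"

lemma deg_le_unit_vec: "deg m \<le> n \<Longrightarrow> deg_le n (unit_vec m)" by (simp add: deg_le_def unit_vec_def)

lemma deg_le_mono: "deg_le n v \<Longrightarrow> n \<le> n' \<Longrightarrow> deg_le n' v" by (auto simp: deg_le_def)

lemma deg_le_add: "deg_le n u \<Longrightarrow> deg_le n w \<Longrightarrow> deg_le n (u + w)" unfolding deg_le_def by (auto; metis add.right_neutral)

lemma deg_le_diff: "deg_le n u \<Longrightarrow> deg_le n w \<Longrightarrow> deg_le n (u - w)" unfolding deg_le_def by (auto; metis)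

lemma deg_le_vscale: "deg_le n u \<Longrightarrow> deg_le n (vscale c u)" by (auto simp: deg_le_def vscale_def)


lemma deg_le_push: assumes "inj f" "\<And>m. deg (f m) = deg m" "deg_le n v" shows "deg_le n (push f v)"
  unfolding deg_le_def
proof (intro allI impI)
  fix m assume a: "push f v m \<noteq> 0"
  then obtain m0 where m0: "m = f m0" by (auto simp: push_def split: if_splits)
  then have "v m0 \<noteq> 0" using a assms(1) by (simp add: push_apply)
  then show "deg m \<le> n" using assms(2,3) m0 by (auto simp: deg_le_def)
qed

lemma deg_succA[simp]: "deg (succA m) = Suc (deg m)" by (cases m) auto

lemma deg_le_opA: assumes "deg_le n v" shows "deg_le (Suc n) (opA v)"
  unfolding deg_le_def
proof (intro allI impI)
  fix m assume a: "opA v m \<noteq> 0"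
  then obtain m0 where m0: "m = succA m0" by (auto simp: push_def split: if_splits)
  then have "v m0 \<noteq> 0" using a inj_succA by (simp add: push_apply)
  then show "deg m \<le> Suc n" using assms m0 by (auto simp: deg_le_def)
qed

lemma deg_le_extend: assumes "deg_le n v" "\<And>m. v m \<noteq> 0 \<Longrightarrow> deg_le n' (f m)" shows "deg_le n' (extend f v)"
  unfolding deg_le_def
proof (intro allI impI)
  fix m' assume "extend f v m' \<noteq> 0"
  then obtain m where "v m \<noteq> 0" "v m * f m m' \<noteq> 0"
    unfolding extend_def by (auto elim: sum.not_neutral_contains_not_neutral)
  then show "deg m' \<le> n'" using assms(2)[of m] by (auto simp: deg_le_def)
qed

lemma extend_cong: "(\<And>m. v m \<noteq> 0 \<Longrightarrow> f m = g m) \<Longrightarrow> extend f v = extend g v"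
  by (auto simp: extend_def fun_eq_iff intro!: sum.cong)

lemma vfin_extend: assumes "vfin v" "\<And>m. v m \<noteq> 0 \<Longrightarrow> vfin (f m)" shows "vfin (extend f v)"
proof -
  have "extend f v = (\<Sum>m\<in>{m. v m \<noteq> 0}. vscale (v m) (f m))"
    by (rule extend_sum) (use assms in \<open>auto simp: vfin_def\<close>)
  then show ?thesis by (simp only:) (intro vfin_sum vfin_vscale, auto intro: assms)
qed

fun central_shift :: "nat \<Rightarrow> nat \<Rightarrow> nat \<Rightarrow> mon \<Rightarrow> mon" where
  "central_shift a b c (Mon i j k r s t) = Mon i j k (r + a) (s + b) (t + c)"

abbreviation shift_op :: "nat \<Rightarrow> nat \<Rightarrow> nat \<Rightarrow> 'a::field vec \<Rightarrow> 'a vec" where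
  "shift_op a b c \<equiv> push (central_shift a b c)"

abbreviation "op_alpha \<equiv> shift_op 1 0 0"

abbreviation "op_beta \<equiv> shift_op 0 1 0"

abbreviation "op_gamma \<equiv> shift_op 0 0 1"

lemma inj_central_shift: "inj (central_shift a b c)" by (rule injI) (case_tac x; case_tac y; simp)

lemma deg_central_shift[simp]: "deg (central_shift a b c m) = deg m" by (cases m) auto

lemma vscale_add: "vscale c (u + w) = vscale c u + vscale c w" by (rule ext) (simp add: vscale_def distrib_left)

lemma vscale_diff: "vscale c (u - w) = vscale c u - vscale c w" by (rule ext) (simp add: vscale_def right_diff_distrib)

lemma vscale_vscale: "vscale c (vscale d u) = vscale (c * d) u" by (rule ext) (simp add: vscale_def)

lemma lin_plus: "lin L1 \<Longrightarrow> lin L2 \<Longrightarrow> lin (\<lambda>v. L1 v + L2 v)"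
  by (simp add: lin_def fun_eq_iff vscale_def distrib_left)

lemma lin_minus: "lin L1 \<Longrightarrow> lin L2 \<Longrightarrow> lin (\<lambda>v. L1 v - L2 v)"
  by (simp add: lin_def fun_eq_iff vscale_def right_diff_distrib)

lemma lin_scal: "lin L \<Longrightarrow> lin (\<lambda>v. vscale c (L v))"
  unfolding lin_def by (simp add: vscale_add vscale_vscale mult.commute)

lemma lin_o: "lin L1 \<Longrightarrow> lin L2 \<Longrightarrow> lin (\<lambda>v. L1 (L2 v))"
  by (simp add: lin_def)

lemma lin_id: "lin (\<lambda>v. v)" by (simp add: lin_def)

lemma lin_opA[simp]: "lin opA" by (simp add: lin_push inj_succA)

lemma lin_shift_op[simp]: "lin (shift_op a b c)" by (simp add: lin_push inj_central_shift)

lemma push_extend: assumes "inj f" "vfin v" "\<And>m. vfin (g m)"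
  shows "push f (extend g v) = extend (\<lambda>m. push f (g m)) v"
proof -
  have l: "lin (\<lambda>v. push f (extend g v))" by (rule lin_o) (auto intro: lin_push lin_extend assms)
  have l2: "lin (extend (\<lambda>m. push f (g m)))" by (rule lin_extend) (simp add: assms)
  show ?thesis by (rule lin_eqI[OF l l2]) (auto simp: assms)
qed

lemma extend_push: assumes "inj f" "vfin v" "\<And>m. vfin (g m)"
  shows "extend g (push f v) = extend (\<lambda>m. g (f m)) v"
proof -
  have l: "lin (\<lambda>v. extend g (push f v))" by (rule lin_o) (auto intro: lin_push lin_extend assms)
  have l2: "lin (extend (\<lambda>m. g (f m)))" by (rule lin_extend) (simp add: assms)
  show ?thesis by (rule lin_eqI[OF l l2]) (auto simp: assms push_unit_vec)
qed

lemma push_add: "push f (u + w) = push f u + push f w"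
  by (rule ext) (simp add: push_def)

lemma push_diff: "push f (u - w) = push f u - push f w"
  by (rule ext) (simp add: push_def)

lemma push_vscale: "push f (vscale c u) = vscale c (push f u)"
  by (rule ext) (simp add: push_def vscale_def)

lemma central_shift_succA: "central_shift a b c (succA m) = succA (central_shift a b c m)" by (cases m) auto

lemma push_commute: assumes "inj f" "inj g" "\<And>m. f (g m) = g (f m)"
  shows "push f (push g v) = push g (push f v)"
proof (rule ext)
  fix m
  show "push f (push g v) m = push g (push f v) m"
  proof (cases "\<exists>m0. m = f (g m0)")
    case True
    then obtain m0 where m0: "m = f (g m0)" by blast
    have "push f (push g v) (f (g m0)) = v m0" by (simp add: push_apply assms(1,2))
    moreover have "push g (push f v) (g (f m0)) = v m0" by (simp add: push_apply assms(1,2))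
    ultimately show ?thesis using m0 assms(3) by metis
  next
    case False
    then have a: "\<forall>x. m \<noteq> f (g x)" by blast
    have "push f (push g v) m = 0"
    proof (cases "m \<in> range f")
      case True
      then obtain m1 where m1: "m = f m1" by auto
      then have "m1 \<notin> range g" using a by auto
      then show ?thesis using m1 by (simp add: push_apply assms(1) push_apply_notin)
    qed (simp add: push_apply_notin)
    moreover have "push g (push f v) m = 0"
    proof (cases "m \<in> range g")
      case True
      then obtain m1 where m1: "m = g m1" by auto
      then have "m1 \<notin> range f" using a assms(3) by auto
      then show ?thesis using m1 by (simp add: push_apply assms(2) push_apply_notin)
    qed (simp add: push_apply_notin)
    ultimately show ?thesis by simp
  qed
qed

lemma opA_shift_op: "opA (shift_op a b c v) = shift_op a b c (opA v)"
  by (rule push_commute[symmetric]) (auto simp: inj_succA inj_central_shift central_shift_succA)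

lemma vfin_opA[simp]: "vfin v \<Longrightarrow> vfin (opA v)" by (simp add: inj_succA)

lemma vfin_shift_op[simp]: "vfin v \<Longrightarrow> vfin (shift_op a b c v)" by (simp add: inj_central_shift)

lemma push_comp: "inj f \<Longrightarrow> inj g \<Longrightarrow> push f (push g v) = push (f \<circ> g) v"
proof (rule ext)
  fix m assume f: "inj f" and g: "inj g"
  show "push f (push g v) m = push (f \<circ> g) v m"
  proof (cases "m \<in> range (f \<circ> g)")
    case True
    then obtain m0 where "m = f (g m0)" by auto
    then show ?thesis using f g by (simp add: push_apply inj_compose[OF f g] push_apply[of "f \<circ> g", simplified])
  next
    case False
    then show ?thesis using f g
      by (auto simp: push_apply_notin push_def image_iff the_inv_f_f split: if_splits)
  qed
qed

lemma shift_op_shift_op: "shift_op a b c (shift_op a' b' c' v) = shift_op (a + a') (b + b') (c + c') v"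
proof -
  have "central_shift a b c \<circ> central_shift a' b' c' = central_shift (a + a') (b + b') (c + c')"
    by (rule ext, case_tac x) auto
  then show ?thesis by (simp add: push_comp inj_central_shift)
qed

lemma shift_op_0: "shift_op 0 0 0 w = w"
proof (rule ext)
  fix m
  have "central_shift 0 0 0 m = m" by (cases m) auto
  then show "shift_op 0 0 0 w m = w m" using push_apply[OF inj_central_shift, of 0 0 0 w m] by simp
qed

lemma deg_le_shift_op: "deg_le d w \<Longrightarrow> deg_le d (shift_op a b c w)"
  by (rule deg_le_push) (auto simp: inj_central_shift)

lemma deg_le_diff_apply: "deg_le d (w - u) \<Longrightarrow> d < deg m \<Longrightarrow> w m = u m"
  by (auto simp: deg_le_def)

definition lead_term :: "nat \<Rightarrow> 'a::field vec \<Rightarrow> 'a \<Rightarrow> mon \<Rightarrow> bool" where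
  "lead_term d w c m \<longleftrightarrow> deg_le d (w - vscale c (unit_vec m))"

lemma lead_term_apply: "lead_term d w c m \<Longrightarrow> d < deg m' \<Longrightarrow> w m' = (if m' = m then c else 0)"
  unfolding lead_term_def by (drule deg_le_diff_apply) (auto simp: vscale_apply unit_vec_def)

lemma lead_term_unit_vec: "deg m = Suc d \<Longrightarrow> lead_term d (unit_vec m) 1 m"
  by (simp add: lead_term_def deg_le_def vscale_def)

lemma lead_term_deg_le: "lead_term d w c m \<Longrightarrow> deg m \<le> D \<Longrightarrow> d \<le> D \<Longrightarrow> deg_le D w"
proof -
  assume a: "lead_term d w c m" "deg m \<le> D" "d \<le> D"
  have "w = (w - vscale c (unit_vec m)) + vscale c (unit_vec m)" by simp
  moreover have "deg_le D (w - vscale c (unit_vec m))" using a by (auto simp: lead_term_def intro: deg_le_mono)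
  moreover have "deg_le D (vscale c (unit_vec m))" using a by (intro deg_le_vscale deg_le_unit_vec)
  ultimately show ?thesis by (metis deg_le_add)
qed

definition top_term :: "nat \<Rightarrow> 'a::field vec \<Rightarrow> 'a \<Rightarrow> mon \<Rightarrow> bool" where
  "top_term n w c m \<longleftrightarrow> deg_le n w \<and> (\<forall>m'. deg m' = n \<longrightarrow> w m' = (if m' = m then c else 0))"

lemma sum_vscale_single: assumes "finite S" "m0 \<in> S" "\<And>m. m \<in> S \<Longrightarrow> f m mt = (if m = m0 then c else 0)"
  shows "(\<Sum>m\<in>S. vscale (v m) (f m)) mt = v m0 * c"
proof -
  have "(\<Sum>m\<in>S. vscale (v m) (f m)) mt = (\<Sum>m\<in>S. if m = m0 then v m0 * c else 0)"
    using assms(3) by (auto simp: sum_fun_apply vscale_apply intro!: sum.cong)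
  also have "\<dots> = v m0 * c" using assms(1,2) by simp
  finally show ?thesis .
qed

lemma top_term_cancel:
  assumes v: "vfin v" "deg_le n v"
    and top: "\<And>m. v m \<noteq> 0 \<Longrightarrow> deg m = n \<Longrightarrow> top_term n (f m) (c m) m \<and> c m \<noteq> 0"
    and le: "n \<le> deg m'"
  shows "(v - (\<Sum>m\<in>{m. v m \<noteq> 0 \<and> deg m = n}. vscale (v m * inverse (c m)) (f m))) m' = 0"
proof -
  let ?T = "{m. v m \<noteq> 0 \<and> deg m = n}"
  have fT: "finite ?T" using v(1) unfolding vfin_def by (rule finite_subset[rotated]) auto
  have eq: "(v - (\<Sum>m\<in>?T. vscale (v m * inverse (c m)) (f m))) m' =
      v m' - (\<Sum>m\<in>?T. v m * inverse (c m) * f m m')"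
    by (simp add: sum_fun_apply vscale_apply)
  show ?thesis
  proof (cases "deg m' = n")
    case True
    have "(\<Sum>m\<in>?T. v m * inverse (c m) * f m m') = (\<Sum>m\<in>?T. if m = m' then v m' else 0)"
    proof (rule sum.cong)
      fix m assume "m \<in> ?T"
      with top True have "f m m' = (if m' = m then c m else 0)" "c m \<noteq> 0"
        by (auto simp: top_term_def)
      then show "v m * inverse (c m) * f m m' = (if m = m' then v m' else 0)" by auto
    qed simp
    also have "\<dots> = v m'" using fT True by (simp add: sum.delta)
    finally show ?thesis using eq by simp
  next
    case False
    then have "n < deg m'" using le by simp
    then have "v m' = 0" "\<And>m. m \<in> ?T \<Longrightarrow> f m m' = 0"
      using v(2) top by (fastforce simp: deg_le_def top_term_def)+
    then show ?thesis using eq by simp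
  qed
qed

lemma vfin_deg_bound:
  assumes "vfin v" obtains n where "\<And>m. n \<le> deg m \<Longrightarrow> v m = 0"
proof -
  have "finite (deg ` {m. v m \<noteq> 0})" using assms by (simp add: vfin_def)
  then obtain n where "\<forall>d\<in>deg ` {m. v m \<noteq> 0}. d < n" using finite_nat_set_iff_bounded by blast
  then show ?thesis using that by (meson imageI leD mem_Collect_eq)
qed

section \<open>The operators of A, B and C\<close>

locale aw =
  fixes q :: "'a::field"
  assumes q0: "q \<noteq> 0" and q4: "q ^ 4 \<noteq> 1"
begin

text \<open>The coefficients of the reordering relations \<open>CB = q\<^sup>2 BC - k1 \<alpha> + k2 A\<close>,
  \<open>BA = q\<^sup>2 AB - k1 \<gamma> + k2 C\<close> and \<open>CA = q\<^bsup>-2\<^esup> AC + k3 \<beta> - k4 B\<close> of \<open>\<Delta>\<close>.\<close>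

definition "k1 = q^2 - 1"

definition "k2 = q^3 - inverse q"

definition "k3 = 1 - inverse (q^2)"

definition "k4 = q - inverse (q^3)"

lemmas k_defs = k1_def k2_def k3_def k4_def

definition "qs = q + inverse q"

definition "qd = q - inverse q"

lemma q2_diff_inverse_eq: "q^2 - inverse (q^2) = qs * qd"
  using q0 by (simp add: qs_def qd_def field_simps power2_eq_square)

lemma qs_nonzero: "qs \<noteq> 0" and qd_nonzero: "qd \<noteq> 0"
proof -
  have "q^2 * (qs * qd) = q^4 - 1"
    using q0 by (simp add: qs_def qd_def field_simps eval_nat_numeral)
  then have "qs * qd \<noteq> 0" using q4 by auto
  then show "qs \<noteq> 0" "qd \<noteq> 0" by auto
qed

lemma k_factored: "k1 = q * qd" "k2 = q * qs * qd" "k3 = inverse q * qd" "k4 = inverse q * qs * qd"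
  using q0 by (simp_all add: k_defs qs_def qd_def field_simps power2_eq_square power3_eq_cube)

definition opB_step :: "(mon \<Rightarrow> 'a vec) \<Rightarrow> (mon \<Rightarrow> 'a vec) \<Rightarrow> mon \<Rightarrow> 'a vec" where
  "opB_step Yp Zp m = (case m of Mon 0 j k r s t \<Rightarrow> unit_vec (Mon 0 (Suc j) k r s t)
     | Mon (Suc i) j k r s t \<Rightarrow> vscale (q^2) (opA (Yp (Mon i j k r s t))) - vscale k1 (unit_vec (Mon i j k r s (Suc t)))
                              + vscale k2 (Zp (Mon i j k r s t)))"

definition opC_step :: "(mon \<Rightarrow> 'a vec) \<Rightarrow> (mon \<Rightarrow> 'a vec) \<Rightarrow> mon \<Rightarrow> 'a vec" where
  "opC_step Yn Zp m = (case m of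
       Mon (Suc i) j k r s t \<Rightarrow> vscale (inverse (q^2)) (opA (Zp (Mon i j k r s t))) + vscale k3 (unit_vec (Mon i j k r (Suc s) t))
                              - vscale k4 (Yn (Mon i j k r s t))
     | Mon 0 (Suc j) k r s t \<Rightarrow> vscale (q^2) (extend Yn (Zp (Mon 0 j k r s t))) - vscale k1 (unit_vec (Mon 0 j k (Suc r) s t))
                              + vscale k2 (unit_vec (Mon 1 j k r s t))
     | Mon 0 0 k r s t \<Rightarrow> unit_vec (Mon 0 0 (Suc k) r s t))"

text \<open>\<open>C\<close> applied to \<open>B\<^bsup>j+1\<^esup> C\<^sup>k \<dots>\<close> needs \<open>B\<close> on vectors of the same degree, so stage
  \<open>n + 1\<close> first extends \<open>B\<close> to the monomials of degree \<open>n\<close> and then \<open>C\<close>, using the new \<open>B\<close>.\<close>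

fun opBC_stage :: "nat \<Rightarrow> (mon \<Rightarrow> 'a vec) \<times> (mon \<Rightarrow> 'a vec)" where
  "opBC_stage 0 = (\<lambda>m. 0, \<lambda>m. 0)"
| "opBC_stage (Suc n) = (let Yp = fst (opBC_stage n); Zp = snd (opBC_stage n);
                     Yn = (\<lambda>m. if deg m < n then Yp m else opB_step Yp Zp m)
                 in (Yn, \<lambda>m. if deg m < n then Zp m else opC_step Yn Zp m))"

definition "opB_mon m = fst (opBC_stage (Suc (deg m))) m"

definition "opC_mon m = snd (opBC_stage (Suc (deg m))) m"

lemma opBC_stage_stable: "deg m < N \<Longrightarrow> fst (opBC_stage N) m = opB_mon m \<and> snd (opBC_stage N) m = opC_mon m"
proof (induction N)
  case 0 then show ?case by simp
next
  case (Suc N)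
  show ?case
  proof (cases "deg m < N")
    case True
    then show ?thesis using Suc by (simp add: Let_def)
  next
    case False
    then have "N = deg m" using Suc by simp
    then show ?thesis by (simp add: opB_mon_def opC_mon_def)
  qed
qed

lemma opB_mon_A0: "opB_mon (Mon 0 j k r s t) = unit_vec (Mon 0 (Suc j) k r s t)"
  by (simp add: opB_mon_def Let_def opB_step_def)

lemma opB_mon_AS: "opB_mon (Mon (Suc i) j k r s t) = vscale (q^2) (opA (opB_mon (Mon i j k r s t))) - vscale k1 (unit_vec (Mon i j k r s (Suc t)))
                              + vscale k2 (opC_mon (Mon i j k r s t))"
  using opBC_stage_stable[of "Mon i j k r s t" "Suc (i + j + k)"]
  by (simp add: opB_mon_def Let_def opB_step_def)

lemma opC_mon_AS: "opC_mon (Mon (Suc i) j k r s t) = vscale (inverse (q^2)) (opA (opC_mon (Mon i j k r s t))) + vscale k3 (unit_vec (Mon i j k r (Suc s) t))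
                              - vscale k4 (opB_mon (Mon i j k r s t))"
  using opBC_stage_stable[of "Mon i j k r s t" "Suc (i + j + k)"]
  by (simp add: opC_mon_def Let_def opC_step_def opB_step_def)

lemma opC_mon_00: "opC_mon (Mon 0 0 k r s t) = unit_vec (Mon 0 0 (Suc k) r s t)"
  by (simp add: opC_mon_def Let_def opC_step_def)

lemma opC_mon_0S_stage: "opC_mon (Mon 0 (Suc j) k r s t) = vscale (q^2) (extend (fst (opBC_stage (Suc (Suc (j + k))))) (opC_mon (Mon 0 j k r s t)))
   - vscale k1 (unit_vec (Mon 0 j k (Suc r) s t)) + vscale k2 (unit_vec (Mon 1 j k r s t))"
  using opBC_stage_stable[of "Mon 0 j k r s t" "Suc (j + k)"]
  by (simp add: opC_mon_def Let_def opC_step_def)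

declare opBC_stage.simps[simp del]

lemma extend_opB_stage:
  assumes "deg_le n v" shows "extend (fst (opBC_stage (Suc n))) v = extend opB_mon v"
  using assms opBC_stage_stable by (auto simp: deg_le_def intro!: extend_cong)

lemma opB_mon_bounds_step:
  assumes IH: "\<And>m'. deg m' < deg m \<Longrightarrow> vfin (opB_mon m') \<and> vfin (opC_mon m') \<and>
      deg_le (Suc (deg m')) (opB_mon m') \<and> deg_le (Suc (deg m')) (opC_mon m')"
  shows "vfin (opB_mon m) \<and> deg_le (Suc (deg m)) (opB_mon m)"
proof -
  obtain i j k r s t where m: "m = Mon i j k r s t" by (cases m)
  show ?thesis
  proof (cases i)
    case 0 then show ?thesis using m by (simp add: opB_mon_A0 deg_le_unit_vec)
  next
    case (Suc i')
    then have "deg (Mon i' j k r s t) < deg m" using m by simp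
    with IH[OF this] show ?thesis using m Suc
      by (auto simp: opB_mon_AS inj_succA intro!: deg_le_add deg_le_diff deg_le_vscale deg_le_opA
          deg_le_unit_vec intro: deg_le_mono)
  qed
qed

lemma opC_mon_bounds_step:
  assumes IH: "\<And>m'. deg m' < deg m \<Longrightarrow> vfin (opB_mon m') \<and> vfin (opC_mon m') \<and>
      deg_le (Suc (deg m')) (opB_mon m') \<and> deg_le (Suc (deg m')) (opC_mon m')"
    and IHB: "\<And>m'. deg m' \<le> deg m \<Longrightarrow> vfin (opB_mon m') \<and> deg_le (Suc (deg m')) (opB_mon m')"
  shows "vfin (opC_mon m) \<and> deg_le (Suc (deg m)) (opC_mon m)"
proof -
  obtain i j k r s t where m: "m = Mon i j k r s t" by (cases m)
  consider i' where "i = Suc i'" | j' where "i = 0" "j = Suc j'" | "i = 0" "j = 0"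
    by (cases i; cases j) auto
  then show ?thesis
  proof cases
    case 1
    then have "deg (Mon i' j k r s t) < deg m" using m by simp
    with IH[OF this] show ?thesis using m 1
      by (auto simp: opC_mon_AS inj_succA intro!: deg_le_add deg_le_diff deg_le_vscale deg_le_opA
          deg_le_unit_vec intro: deg_le_mono)
  next
    case 2
    let ?m' = "Mon 0 j' k r s t"
    have "deg ?m' < deg m" using m 2 by simp
    note ih = IH[OF this]
    have le: "deg m1 \<le> deg m" if "opC_mon ?m' m1 \<noteq> 0" for m1
      using ih that m 2 by (auto simp: deg_le_def)
    have "vfin (extend opB_mon (opC_mon ?m'))"
      by (rule vfin_extend) (use ih IHB le in auto)
    moreover have "deg_le (Suc (deg m)) (extend opB_mon (opC_mon ?m'))"
      by (rule deg_le_extend[of "deg m"]) (use ih m 2 IHB le in \<open>auto intro: deg_le_mono\<close>)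
    moreover have "deg_le (Suc (j' + k)) (opC_mon ?m')" using ih by simp
    ultimately show ?thesis using m 2
      by (auto simp: opC_mon_0S_stage extend_opB_stage
          intro!: deg_le_add deg_le_diff deg_le_vscale deg_le_unit_vec)
  next
    case 3 then show ?thesis using m by (simp add: opC_mon_00 deg_le_unit_vec)
  qed
qed

lemma opBC_mon_bounds: "vfin (opB_mon m) \<and> vfin (opC_mon m) \<and>
    deg_le (Suc (deg m)) (opB_mon m) \<and> deg_le (Suc (deg m)) (opC_mon m)"
proof (induction "deg m" arbitrary: m rule: less_induct)
  case less
  have B: "vfin (opB_mon m') \<and> deg_le (Suc (deg m')) (opB_mon m')" if "deg m' \<le> deg m" for m'
    using less that opB_mon_bounds_step[of m'] by (metis le_less_trans nat_less_le)
  show ?case using B opC_mon_bounds_step[OF less] by blast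
qed

lemma vfin_opB_mon[simp]: "vfin (opB_mon m)" using opBC_mon_bounds by blast

lemma vfin_opC_mon[simp]: "vfin (opC_mon m)" using opBC_mon_bounds by blast

lemma deg_le_opB_mon: "deg_le (Suc (deg m)) (opB_mon m)" using opBC_mon_bounds by blast

lemma deg_le_opC_mon: "deg_le (Suc (deg m)) (opC_mon m)" using opBC_mon_bounds by blast

lemma opC_mon_0S: "opC_mon (Mon 0 (Suc j) k r s t) = vscale (q^2) (extend opB_mon (opC_mon (Mon 0 j k r s t)))
   - vscale k1 (unit_vec (Mon 0 j k (Suc r) s t)) + vscale k2 (unit_vec (Mon 1 j k r s t))"
  using deg_le_opC_mon[of "Mon 0 j k r s t"] by (simp add: opC_mon_0S_stage extend_opB_stage)

lemma opB_mon_central_shift_step: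
  assumes IH: "\<And>m'. deg m' < deg m \<Longrightarrow> opB_mon (central_shift a b c m') = shift_op a b c (opB_mon m') \<and>
      opC_mon (central_shift a b c m') = shift_op a b c (opC_mon m')"
  shows "opB_mon (central_shift a b c m) = shift_op a b c (opB_mon m)"
proof -
  obtain i j k r s t where m: "m = Mon i j k r s t" by (cases m)
  show ?thesis
  proof (cases i)
    case 0 then show ?thesis using m by (simp add: opB_mon_A0 push_unit_vec inj_central_shift)
  next
    case (Suc i')
    then have "deg (Mon i' j k r s t) < deg m" using m by simp
    with IH[OF this] show ?thesis using m Suc
      by (simp add: opB_mon_AS push_add push_diff push_vscale opA_shift_op push_unit_vec inj_central_shift)
  qed
qed

lemma opC_mon_central_shift_step:
  assumes IH: "\<And>m'. deg m' < deg m \<Longrightarrow> opB_mon (central_shift a b c m') = shift_op a b c (opB_mon m') \<and>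
      opC_mon (central_shift a b c m') = shift_op a b c (opC_mon m')"
    and IHB: "\<And>m'. deg m' \<le> deg m \<Longrightarrow> opB_mon (central_shift a b c m') = shift_op a b c (opB_mon m')"
  shows "opC_mon (central_shift a b c m) = shift_op a b c (opC_mon m)"
proof -
  obtain i j k r s t where m: "m = Mon i j k r s t" by (cases m)
  consider i' where "i = Suc i'" | j' where "i = 0" "j = Suc j'" | "i = 0" "j = 0"
    by (cases i; cases j) auto
  then show ?thesis
  proof cases
    case 1
    then have "deg (Mon i' j k r s t) < deg m" using m by simp
    with IH[OF this] show ?thesis using m 1
      by (simp add: opC_mon_AS push_add push_diff push_vscale opA_shift_op push_unit_vec inj_central_shift)
  next
    case 2
    let ?m' = "Mon 0 j' k r s t"
    have "deg ?m' < deg m" using m 2 by simp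
    note ih = IH[OF this]
    have le: "deg m1 \<le> deg m" if "opC_mon ?m' m1 \<noteq> 0" for m1
      using deg_le_opC_mon[of ?m'] that m 2 by (auto simp: deg_le_def)
    have "extend opB_mon (opC_mon (central_shift a b c ?m')) =
        extend (\<lambda>m1. opB_mon (central_shift a b c m1)) (opC_mon ?m')"
      using ih by (simp add: extend_push inj_central_shift)
    also have "\<dots> = extend (\<lambda>m1. shift_op a b c (opB_mon m1)) (opC_mon ?m')"
      by (rule extend_cong) (use IHB le in auto)
    also have "\<dots> = shift_op a b c (extend opB_mon (opC_mon ?m'))"
      by (simp add: push_extend inj_central_shift)
    finally show ?thesis using m 2
      by (simp add: opC_mon_0S push_add push_diff push_vscale push_unit_vec inj_central_shift)
  next
    case 3 then show ?thesis using m by (simp add: opC_mon_00 push_unit_vec inj_central_shift)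
  qed
qed

lemma opBC_mon_central_shift: "opB_mon (central_shift a b c m) = shift_op a b c (opB_mon m) \<and>
    opC_mon (central_shift a b c m) = shift_op a b c (opC_mon m)"
proof (induction "deg m" arbitrary: m rule: less_induct)
  case less
  have B: "opB_mon (central_shift a b c m') = shift_op a b c (opB_mon m')" if "deg m' \<le> deg m" for m'
    using less that opB_mon_central_shift_step[of m'] by (metis le_less_trans nat_less_le)
  show ?case using B opC_mon_central_shift_step[OF less] by blast
qed

definition "opB = extend opB_mon"

definition "opC = extend opC_mon"

lemma lin_opB[simp]: "lin opB" by (simp add: opB_def lin_extend)

lemma lin_opC[simp]: "lin opC" by (simp add: opC_def lin_extend)

lemma vfin_opB[simp]: "vfin v \<Longrightarrow> vfin (opB v)" using lin_opB lin_vfin by blast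

lemma vfin_opC[simp]: "vfin v \<Longrightarrow> vfin (opC v)" using lin_opC lin_vfin by blast

lemma opB_shift_op: "vfin v \<Longrightarrow> opB (shift_op a b c v) = shift_op a b c (opB v)"
  by (rule lin_eqI[OF lin_o[OF lin_opB lin_shift_op] lin_o[OF lin_shift_op lin_opB]])
     (auto simp: opB_def push_unit_vec inj_central_shift opBC_mon_central_shift)

lemma opC_shift_op: "vfin v \<Longrightarrow> opC (shift_op a b c v) = shift_op a b c (opC v)"
  by (rule lin_eqI[OF lin_o[OF lin_opC lin_shift_op] lin_o[OF lin_shift_op lin_opC]])
     (auto simp: opC_def push_unit_vec inj_central_shift opBC_mon_central_shift)

lemma unit_vec_succA: "unit_vec (succA m) = opA (unit_vec m)" by (simp add: push_unit_vec inj_succA)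

lemma opB_opA: "vfin v \<Longrightarrow> opB (opA v) = vscale (q^2) (opA (opB v)) - vscale k1 (op_gamma v) + vscale k2 (opC v)"
proof (rule lin_eqI[OF lin_o[OF lin_opB lin_opA] lin_plus[OF lin_minus[OF lin_scal[OF lin_o[OF lin_opA lin_opB]] lin_scal[OF lin_shift_op]] lin_scal[OF lin_opC]]])
  fix m show "opB (opA (unit_vec m)) = vscale (q^2) (opA (opB (unit_vec m))) - vscale k1 (op_gamma (unit_vec m)) + vscale k2 (opC (unit_vec m))"
    by (cases m) (simp add: opB_def opC_def push_unit_vec inj_succA inj_central_shift opB_mon_AS fun_eq_iff)
qed

lemma opC_opA: "vfin v \<Longrightarrow> opC (opA v) = vscale (inverse (q^2)) (opA (opC v)) + vscale k3 (op_beta v) - vscale k4 (opB v)"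
proof (rule lin_eqI[OF lin_o[OF lin_opC lin_opA] lin_minus[OF lin_plus[OF lin_scal[OF lin_o[OF lin_opA lin_opC]] lin_scal[OF lin_shift_op]] lin_scal[OF lin_opB]]])
  fix m show "opC (opA (unit_vec m)) = vscale (inverse (q^2)) (opA (opC (unit_vec m))) + vscale k3 (op_beta (unit_vec m)) - vscale k4 (opB (unit_vec m))"
    by (cases m) (simp add: opB_def opC_def push_unit_vec inj_succA inj_central_shift opC_mon_AS fun_eq_iff)
qed

lemma q2_mult_inverse_cancel: "q^2 * (inverse (q^2) * x) = x" using q0 by (simp add: mult.assoc[symmetric])

text \<open>The relation \<open>CB = q\<^sup>2 BC - k1 \<alpha> + k2 A\<close> holds on \<open>A w\<close> once it holds on \<open>w\<close>:
  on both sides \<open>A\<close> is moved to the front with the other two relations.\<close>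

lemma opC_opB_succA: assumes w: "vfin w"
  and IH: "opC (opB w) = vscale (q^2) (opB (opC w)) - vscale k1 (op_alpha w) + vscale k2 (opA w)"
  shows "opC (opB (opA w)) = vscale (q^2) (opB (opC (opA w))) - vscale k1 (op_alpha (opA w)) + vscale k2 (opA (opA w))"
proof -
  have CBA: "opC (opB (opA w)) = vscale (q^2) (opC (opA (opB w))) - vscale k1 (opC (op_gamma w)) + vscale k2 (opC (opC w))"
    using w by (simp add: opB_opA lin_add[OF lin_opC] lin_diff[OF lin_opC] lin_vscale[OF lin_opC])
  have CAB: "opC (opA (opB w)) = vscale (inverse (q^2)) (opA (opC (opB w))) + vscale k3 (op_beta (opB w)) - vscale k4 (opB (opB w))"
    using w by (simp add: opC_opA)
  have C_gamma: "opC (op_gamma w) = op_gamma (opC w)" using w by (simp add: opC_shift_op)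
  have BCA: "opB (opC (opA w)) = vscale (inverse (q^2)) (opB (opA (opC w))) + vscale k3 (opB (op_beta w)) - vscale k4 (opB (opB w))"
    using w by (simp add: opC_opA lin_add[OF lin_opB] lin_diff[OF lin_opB] lin_vscale[OF lin_opB])
  have BAC: "opB (opA (opC w)) = vscale (q^2) (opA (opB (opC w))) - vscale k1 (op_gamma (opC w)) + vscale k2 (opC (opC w))"
    using w by (simp add: opB_opA)
  have B_beta: "opB (op_beta w) = op_beta (opB w)" using w by (simp add: opB_shift_op)
  have alpha_A: "op_alpha (opA w) = opA (op_alpha w)" by (simp add: opA_shift_op)
  have ACB: "opA (opC (opB w)) = vscale (q^2) (opA (opB (opC w))) - vscale k1 (opA (op_alpha w)) + vscale k2 (opA (opA w))"
    using w by (simp add: IH lin_add[OF lin_opA] lin_diff[OF lin_opA] lin_vscale[OF lin_opA])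
  show ?thesis
    unfolding CBA CAB C_gamma BCA BAC B_beta alpha_A
  proof (rule ext)
    fix x
    have ACB_at: "opA (opC (opB w)) x = q^2 * opA (opB (opC w)) x - k1 * opA (op_alpha w) x + k2 * opA (opA w) x"
      using fun_cong[OF ACB, of x] by (simp add: vscale_apply)
    show "(vscale (q\<^sup>2) (vscale (inverse (q\<^sup>2)) (opA (opC (opB w))) + vscale k3 (op_beta (opB w)) - vscale k4 (opB (opB w))) -
          vscale k1 (op_gamma (opC w)) + vscale k2 (opC (opC w))) x =
         (vscale (q\<^sup>2) (vscale (inverse (q\<^sup>2)) (vscale (q\<^sup>2) (opA (opB (opC w))) - vscale k1 (op_gamma (opC w)) + vscale k2 (opC (opC w))) +
            vscale k3 (op_beta (opB w)) - vscale k4 (opB (opB w))) -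
          vscale k1 (opA (op_alpha w)) + vscale k2 (opA (opA w))) x"
      by (simp add: vscale_apply ACB_at algebra_simps q2_mult_inverse_cancel)
  qed
qed

lemma opC_opB_unit_vec: "opC (opB (unit_vec (Mon i j k r s t))) = vscale (q^2) (opB (opC (unit_vec (Mon i j k r s t)))) - vscale k1 (op_alpha (unit_vec (Mon i j k r s t))) + vscale k2 (opA (unit_vec (Mon i j k r s t)))"
proof (induction i arbitrary: j k r s t)
  case 0
  show ?case by (simp add: opB_def opC_def opB_mon_A0 opC_mon_0S push_unit_vec inj_succA inj_central_shift fun_eq_iff)
next
  case (Suc i)
  have eq: "unit_vec (Mon (Suc i) j k r s t) = opA (unit_vec (Mon i j k r s t))" by (simp add: push_unit_vec inj_succA)
  show ?case unfolding eq by (rule opC_opB_succA[OF vfin_unit_vec Suc.IH])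
qed

lemma opC_opB: "vfin v \<Longrightarrow> opC (opB v) = vscale (q^2) (opB (opC v)) - vscale k1 (op_alpha v) + vscale k2 (opA v)"
proof (rule lin_eqI[OF lin_o[OF lin_opC lin_opB] lin_plus[OF lin_minus[OF lin_scal[OF lin_o[OF lin_opB lin_opC]] lin_scal[OF lin_shift_op]] lin_scal[OF lin_opA]]])
  fix m show "opC (opB (unit_vec m)) = vscale (q^2) (opB (opC (unit_vec m))) - vscale k1 (op_alpha (unit_vec m)) + vscale k2 (opA (unit_vec m))"
    by (cases m) (simp only: opC_opB_unit_vec)
qed

section \<open>The representation\<close>

fun gen_op :: "gen \<Rightarrow> 'a vec \<Rightarrow> 'a vec" where
  "gen_op GA = opA" | "gen_op GB = opB" | "gen_op GC = opC"

fun word_op :: "gen list \<Rightarrow> 'a vec \<Rightarrow> 'a vec" where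
  "word_op [] v = v" | "word_op (g # w) v = gen_op g (word_op w v)"

lemma lin_gen_op[simp]: "lin (gen_op g)" by (cases g) auto

lemma lin_word_op[simp]: "lin (word_op w)"
  by (induction w) (auto simp: lin_id intro: lin_o[OF lin_gen_op, simplified])

lemma vfin_word_op[simp]: "vfin w \<Longrightarrow> vfin (word_op u w)" by (simp add: lin_vfin[OF lin_word_op])

lemma word_op_append: "word_op (u @ w) v = word_op u (word_op w v)" by (induction u) auto

definition rho :: "'a ncpoly \<Rightarrow> 'a vec \<Rightarrow> 'a vec" where
  "rho p v = (\<Sum>w\<in>{w. p w \<noteq> 0}. vscale (p w) (word_op w v))"

lemma rho_sum_superset: assumes "fin p" "{w. p w \<noteq> 0} \<subseteq> S" "finite S"
  shows "rho p v = (\<Sum>w\<in>S. vscale (p w) (word_op w v))"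
  unfolding rho_def by (rule sum.mono_neutral_left) (use assms in \<open>auto simp: vscale_zero\<close>)

lemma vfin_rho[simp]: "vfin v \<Longrightarrow> vfin (rho p v)"
  unfolding rho_def by (intro vfin_sum vfin_vscale lin_vfin[OF lin_word_op])

lemma rho_add: assumes "fin p" "fin p'" shows "rho (p + p') v = rho p v + rho p' v"
proof -
  let ?S = "{w. p w \<noteq> 0} \<union> {w. p' w \<noteq> 0}"
  have f: "finite ?S" using assms by (simp add: fin_def)
  show ?thesis
    by (subst (1 2 3) rho_sum_superset[where S="?S"])
      (use assms f in \<open>auto simp: sum.distrib[symmetric] vscale_def fun_eq_iff distrib_right sum_fun_apply\<close>)
qed

lemma rho_smult: assumes "fin p" shows "rho (c \<cdot> p) v = vscale c (rho p v)"
proof -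
  let ?S = "{w. p w \<noteq> 0}"
  have f: "finite ?S" using assms by (simp add: fin_def)
  show ?thesis
    by (subst (1 2) rho_sum_superset[where S="?S"])
      (use assms f in \<open>auto simp: nc_smult_apply vscale_def fun_eq_iff sum_fun_apply sum_distrib_left mult.assoc\<close>)
qed

lemma rho_zero: "rho 0 v = 0" by (simp add: rho_def)

lemma rho_diff: assumes "fin p" "fin p'" shows "rho (p - p') v = rho p v - rho p' v"
proof -
  have "rho p v = rho ((p - p') + p') v" by simp
  also have "\<dots> = rho (p - p') v + rho p' v" using rho_add[OF fin_diff[OF assms] assms(2)] .
  finally show ?thesis by simp
qed

lemma rho_sum: "(\<And>i. i \<in> S \<Longrightarrow> fin (f i)) \<Longrightarrow> rho (sum f S) v = (\<Sum>i\<in>S. rho (f i) v)"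
  by (induction S rule: infinite_finite_induct) (auto simp: rho_zero rho_add)

lemma rho_nc_word: "rho (nc_word w) v = word_op w v"
  by (simp add: rho_def nc_word_def vscale_def)

lemma rho_nc_word_mult: assumes "fin p" "vfin v" shows "rho (nc_word u \<otimes> p) v = word_op u (rho p v)"
proof -
  let ?S = "{w. p w \<noteq> 0}"
  have "nc_word u \<otimes> p = (\<Sum>w\<in>?S. p w \<cdot> nc_word (u @ w))"
    by (subst nc_poly_decomp[OF assms(1)]) (simp add: nc_mult_sum_right nc_mult_smult_right nc_word_mult_nc_word)
  then have "rho (nc_word u \<otimes> p) v = (\<Sum>w\<in>?S. vscale (p w) (word_op u (word_op w v)))"
    by (simp add: rho_sum rho_smult rho_nc_word word_op_append)
  also have "\<dots> = word_op u (rho p v)"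
    unfolding rho_def using assms by (simp add: lin_sum[OF lin_word_op] lin_vscale[OF lin_word_op] lin_vfin[OF lin_word_op])
  finally show ?thesis .
qed

lemma rho_mult: assumes "fin p" "fin p'" "vfin v" shows "rho (p \<otimes> p') v = rho p (rho p' v)"
proof -
  let ?S = "{w. p w \<noteq> 0}"
  have "p \<otimes> p' = (\<Sum>w\<in>?S. p w \<cdot> (nc_word w \<otimes> p'))"
    by (subst nc_poly_decomp[OF assms(1)]) (simp add: nc_mult_sum_left nc_mult_smult_left)
  then have "rho (p \<otimes> p') v = (\<Sum>w\<in>?S. vscale (p w) (word_op w (rho p' v)))"
    using assms by (simp add: rho_sum rho_smult rho_nc_word_mult)
  also have "\<dots> = rho p (rho p' v)" by (simp add: rho_def)
  finally show ?thesis .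
qed

lemma rho_var: "rho (nc_var g) v = gen_op g v" by (simp add: nc_var_eq_nc_word rho_nc_word)

lemma rho_one: "rho nc_one v = v" by (simp add: nc_one_eq_nc_word rho_nc_word)

lemma rho_alpha: assumes "vfin v" shows "rho (aw_alpha q) v = op_alpha v"
proof -
  have "rho (aw_alpha q) v = vscale qs (opA v + vscale (inverse (qs * qd))
      (vscale q (opB (opC v)) - vscale (inverse q) (opC (opB v))))"
    using assms by (simp add: aw_alpha_def rho_smult rho_add rho_diff rho_mult rho_var flip: qs_def q2_diff_inverse_eq)
  also have "\<dots> = op_alpha v"
  proof (rule ext)
    fix x
    have r: "opC (opB v) x = q^2 * opB (opC v) x - k1 * op_alpha v x + k2 * opA v x"
      using fun_cong[OF opC_opB[OF assms], of x] by (simp add: vscale_apply)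
    show "vscale qs (opA v + vscale (inverse (qs * qd))
      (vscale q (opB (opC v)) - vscale (inverse q) (opC (opB v)))) x = op_alpha v x"
      using q0 qs_nonzero qd_nonzero by (simp add: vscale_apply r k_factored field_simps power2_eq_square)
  qed
  finally show ?thesis .
qed

lemma rho_beta: assumes "vfin v" shows "rho (aw_beta q) v = op_beta v"
proof -
  have "rho (aw_beta q) v = vscale qs (opB v + vscale (inverse (qs * qd))
      (vscale q (opC (opA v)) - vscale (inverse q) (opA (opC v))))"
    using assms by (simp add: aw_beta_def rho_smult rho_add rho_diff rho_mult rho_var flip: qs_def q2_diff_inverse_eq)
  also have "\<dots> = op_beta v"
  proof (rule ext)
    fix x
    have r: "opC (opA v) x = inverse (q^2) * opA (opC v) x + k3 * op_beta v x - k4 * opB v x"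
      using fun_cong[OF opC_opA[OF assms], of x] by (simp add: vscale_apply)
    show "vscale qs (opB v + vscale (inverse (qs * qd))
      (vscale q (opC (opA v)) - vscale (inverse q) (opA (opC v)))) x = op_beta v x"
      using q0 qs_nonzero qd_nonzero by (simp add: vscale_apply r k_factored field_simps power2_eq_square)
  qed
  finally show ?thesis .
qed

lemma rho_gamma: assumes "vfin v" shows "rho (aw_gamma q) v = op_gamma v"
proof -
  have "rho (aw_gamma q) v = vscale qs (opC v + vscale (inverse (qs * qd))
      (vscale q (opA (opB v)) - vscale (inverse q) (opB (opA v))))"
    using assms by (simp add: aw_gamma_def rho_smult rho_add rho_diff rho_mult rho_var flip: qs_def q2_diff_inverse_eq)
  also have "\<dots> = op_gamma v"
  proof (rule ext)
    fix x
    have r: "opB (opA v) x = q^2 * opA (opB v) x - k1 * op_gamma v x + k2 * opC v x"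
      using fun_cong[OF opB_opA[OF assms], of x] by (simp add: vscale_apply)
    show "vscale qs (opC v + vscale (inverse (qs * qd))
      (vscale q (opA (opB v)) - vscale (inverse q) (opB (opA v)))) x = op_gamma v x"
      using q0 qs_nonzero qd_nonzero by (simp add: vscale_apply r k_factored field_simps power2_eq_square)
  qed
  finally show ?thesis .
qed

lemma gen_op_shift_op: "vfin v \<Longrightarrow> gen_op g (shift_op a b c v) = shift_op a b c (gen_op g v)"
  by (cases g) (auto simp: opA_shift_op opB_shift_op opC_shift_op)

lemma rho_aw_ideal: "x \<in> aw_ideal q \<Longrightarrow> vfin v \<Longrightarrow> rho x v = 0"
proof (induction arbitrary: v rule: aw_ideal.induct)
  case (rel X g)
  then have fX: "fin X" and fg: "fin g" by auto
  obtain h where g: "g = nc_var h" using rel(2) by (metis empty_iff insert_iff)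
  have "\<exists>a b c. \<forall>v. vfin v \<longrightarrow> rho X v = shift_op a b c v"
    using rel(1) rho_alpha rho_beta rho_gamma by blast
  then obtain a b c where X: "\<And>v. vfin v \<Longrightarrow> rho X v = shift_op a b c v" by blast
  have "rho (X \<otimes> g \<ominus> g \<otimes> X) v = rho (X \<otimes> g) v - rho (g \<otimes> X) v"
    unfolding nc_diff_eq by (rule rho_diff) (use fX fg in simp_all)
  also have "\<dots> = rho X (gen_op h v) - gen_op h (rho X v)"
    using fX fg rel.prems by (simp only: rho_mult rho_var g fin_var)
  also have "\<dots> = 0"
    using rel.prems by (simp only: X gen_op_shift_op lin_vfin[OF lin_gen_op] diff_self)
  finally show ?case .
next
  case zero then show ?case by (simp only: nc_zero_eq rho_zero)
next
  case (add x y)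
  have "rho (x \<oplus> y) v = rho x v + rho y v" unfolding nc_add_eq
    by (rule rho_add) (use aw_ideal_fin add.hyps in auto)
  also have "\<dots> = 0" using add.IH add.prems by (simp add: zero_fun_def[symmetric])
  finally show ?case .
next
  case (lmult p x)
  have "rho (p \<otimes> x) v = rho p (rho x v)" using lmult by (simp add: rho_mult aw_ideal_fin)
  also have "\<dots> = rho p 0" using lmult by (simp add: zero_fun_def[symmetric])
  also have "\<dots> = 0" by (simp add: rho_def lin_zero[OF lin_word_op] vscale_def zero_fun_def[symmetric])
  finally show ?case .
next
  case (rmult p x)
  have "rho (x \<otimes> p) v = rho x (rho p v)" using rmult by (simp add: rho_mult aw_ideal_fin)
  also have "\<dots> = 0" using rmult by (simp add: zero_fun_def[symmetric])
  finally show ?case .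
qed

section \<open>The PBW monomials span the algebra\<close>


lemma gB_gA_reorder: "nc_var GB \<otimes> nc_var GA = q^2 \<cdot> (nc_var GA \<otimes> nc_var GB) - k1 \<cdot> aw_gamma q + k2 \<cdot> nc_var GC"
proof (rule ext)
  fix w
  show "(nc_var GB \<otimes> nc_var GA) w = (q^2 \<cdot> (nc_var GA \<otimes> nc_var GB) - k1 \<cdot> aw_gamma q + k2 \<cdot> nc_var GC) w"
    using q0 qs_nonzero qd_nonzero unfolding aw_gamma_def q2_diff_inverse_eq qs_def[symmetric]
    by (auto simp: nc_var_eq_nc_word nc_word_mult_nc_word nc_smult_apply nc_word_def k_factored field_simps power2_eq_square)
qed

lemma gC_gA_reorder: "nc_var GC \<otimes> nc_var GA = inverse (q^2) \<cdot> (nc_var GA \<otimes> nc_var GC) + k3 \<cdot> aw_beta q - k4 \<cdot> nc_var GB"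
proof (rule ext)
  fix w
  show "(nc_var GC \<otimes> nc_var GA) w = (inverse (q^2) \<cdot> (nc_var GA \<otimes> nc_var GC) + k3 \<cdot> aw_beta q - k4 \<cdot> nc_var GB) w"
    using q0 qs_nonzero qd_nonzero unfolding aw_beta_def q2_diff_inverse_eq qs_def[symmetric]
    by (auto simp: nc_var_eq_nc_word nc_word_mult_nc_word nc_smult_apply nc_word_def k_factored field_simps power2_eq_square)
qed

lemma gC_gB_reorder: "nc_var GC \<otimes> nc_var GB = q^2 \<cdot> (nc_var GB \<otimes> nc_var GC) - k1 \<cdot> aw_alpha q + k2 \<cdot> nc_var GA"
proof (rule ext)
  fix w
  show "(nc_var GC \<otimes> nc_var GB) w = (q^2 \<cdot> (nc_var GB \<otimes> nc_var GC) - k1 \<cdot> aw_alpha q + k2 \<cdot> nc_var GA) w"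
    using q0 qs_nonzero qd_nonzero unfolding aw_alpha_def q2_diff_inverse_eq qs_def[symmetric]
    by (auto simp: nc_var_eq_nc_word nc_word_mult_nc_word nc_smult_apply nc_word_def k_factored field_simps power2_eq_square)
qed

definition abc_word :: "nat \<Rightarrow> nat \<Rightarrow> nat \<Rightarrow> gen list" where
  "abc_word i j k = replicate i GA @ replicate j GB @ replicate k GC"

fun pbw_elem :: "mon \<Rightarrow> 'a ncpoly" where
  "pbw_elem (Mon i j k r s t) =
    nc_word (abc_word i j k) \<otimes> (nc_pow (aw_alpha q) r \<otimes> (nc_pow (aw_beta q) s \<otimes> nc_pow (aw_gamma q) t))"

lemma fin_pbw_elem[simp]: "fin (pbw_elem m)" by (cases m) auto

definition pbw_poly :: "'a vec \<Rightarrow> 'a ncpoly" where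
  "pbw_poly v = (\<Sum>m\<in>{m. v m \<noteq> 0}. v m \<cdot> pbw_elem m)"

lemma pbw_poly_superset: assumes "{m. v m \<noteq> 0} \<subseteq> S" "finite S"
  shows "pbw_poly v = (\<Sum>m\<in>S. v m \<cdot> pbw_elem m)"
  unfolding pbw_poly_def by (rule sum.mono_neutral_left) (use assms in \<open>auto simp: nc_smult_zero\<close>)

lemma fin_pbw_poly[simp]: "fin (pbw_poly v)" by (simp add: pbw_poly_def)

lemma pbw_poly_add: assumes "vfin u" "vfin w" shows "pbw_poly (u + w) = pbw_poly u + pbw_poly w"
proof -
  let ?S = "{m. u m \<noteq> 0} \<union> {m. w m \<noteq> 0}"
  have f: "finite ?S" using assms by (simp add: vfin_def)
  show ?thesis
    by (subst (1 2 3) pbw_poly_superset[where S="?S"]) (use f in \<open>auto simp: sum.distrib[symmetric] nc_add_smult\<close>)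
qed

lemma pbw_poly_vscale: assumes "vfin u" shows "pbw_poly (vscale c u) = c \<cdot> pbw_poly u"
proof -
  let ?S = "{m. u m \<noteq> 0}"
  have f: "finite ?S" using assms by (simp add: vfin_def)
  show ?thesis
    by (subst (1 2) pbw_poly_superset[where S="?S"]) (use f in \<open>auto simp: vscale_apply nc_smult_sum nc_smult_smult\<close>)
qed

lemma pbw_poly_zero: "pbw_poly 0 = 0" by (simp add: pbw_poly_def)

lemma pbw_poly_diff: assumes "vfin u" "vfin w" shows "pbw_poly (u - w) = pbw_poly u - pbw_poly w"
proof -
  have "pbw_poly u = pbw_poly ((u - w) + w)" by simp
  also have "\<dots> = pbw_poly (u - w) + pbw_poly w" using pbw_poly_add[OF vfin_diff[OF assms] assms(2)] .
  finally show ?thesis by simp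
qed

lemma pbw_poly_sum: "(\<And>i. i \<in> I \<Longrightarrow> vfin (f i)) \<Longrightarrow> pbw_poly (sum f I) = (\<Sum>i\<in>I. pbw_poly (f i))"
  by (induction I rule: infinite_finite_induct) (auto simp: pbw_poly_zero pbw_poly_add)

lemma pbw_poly_unit_vec: "pbw_poly (unit_vec m) = pbw_elem m"
  by (simp add: pbw_poly_def unit_vec_def nc_smult_one)

lemma pbw_poly_lin_eqv: assumes "lin L" "vfin v" "\<And>m. v m \<noteq> 0 \<Longrightarrow> eqv q (p \<otimes> pbw_elem m) (pbw_poly (L (unit_vec m)))" "fin p"
  shows "eqv q (p \<otimes> pbw_poly v) (pbw_poly (L v))"
proof -
  let ?S = "{m. v m \<noteq> 0}"
  have "p \<otimes> pbw_poly v = (\<Sum>m\<in>?S. v m \<cdot> (p \<otimes> pbw_elem m))"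
    by (simp add: pbw_poly_def nc_mult_sum_right nc_mult_smult_right)
  moreover have "pbw_poly (L v) = (\<Sum>m\<in>?S. v m \<cdot> pbw_poly (L (unit_vec m)))"
  proof -
    have "L v = L (\<Sum>m\<in>?S. vscale (v m) (unit_vec m))" using vec_decomp[OF assms(2)] by simp
    also have "\<dots> = (\<Sum>m\<in>?S. vscale (v m) (L (unit_vec m)))" using assms(1) by (simp add: lin_sum lin_vscale)
    finally show ?thesis using assms(1) by (simp add: pbw_poly_sum pbw_poly_vscale lin_vfin)
  qed
  moreover have "eqv q (\<Sum>m\<in>?S. v m \<cdot> (p \<otimes> pbw_elem m)) (\<Sum>m\<in>?S. v m \<cdot> pbw_poly (L (unit_vec m)))"
    by (rule eqv_sum) (auto intro: eqv_smult assms(3))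
  ultimately show ?thesis by simp
qed

lemma aw_center_move: "c \<in> aw_center q \<Longrightarrow> fin y \<Longrightarrow> fin z \<Longrightarrow> eqv q (c \<otimes> (y \<otimes> z)) (y \<otimes> (c \<otimes> z))"
  by (metis aw_center_commutes commutes_def eqv_rmult nc_mult_assoc)

lemma gA_mult_pbw_elem: "nc_var GA \<otimes> pbw_elem (Mon i j k r s t) = pbw_elem (Mon (Suc i) j k r s t)"
  by (simp add: nc_var_eq_nc_word abc_word_def flip: nc_mult_assoc add: nc_word_mult_nc_word)

lemma gB_mult_pbw_elem: "nc_var GB \<otimes> pbw_elem (Mon 0 j k r s t) = pbw_elem (Mon 0 (Suc j) k r s t)"
  by (simp add: nc_var_eq_nc_word abc_word_def flip: nc_mult_assoc add: nc_word_mult_nc_word)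

lemma gC_mult_pbw_elem: "nc_var GC \<otimes> pbw_elem (Mon 0 0 k r s t) = pbw_elem (Mon 0 0 (Suc k) r s t)"
  by (simp add: nc_var_eq_nc_word abc_word_def flip: nc_mult_assoc add: nc_word_mult_nc_word)

lemma alpha_mult_pbw_elem: "eqv q (aw_alpha q \<otimes> pbw_elem (Mon i j k r s t)) (pbw_elem (Mon i j k (Suc r) s t))"
  by (simp add: aw_center_move aw_center_alpha nc_mult_assoc)

lemma beta_mult_pbw_elem: "eqv q (aw_beta q \<otimes> pbw_elem (Mon i j k r s t)) (pbw_elem (Mon i j k r (Suc s) t))"
proof -
  let ?W = "nc_word (abc_word i j k)" and ?a = "nc_pow (aw_alpha q) r" and ?b = "nc_pow (aw_beta q) s" and ?c = "nc_pow (aw_gamma q) t"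
  have "eqv q (aw_beta q \<otimes> (?W \<otimes> (?a \<otimes> (?b \<otimes> ?c)))) (?W \<otimes> (aw_beta q \<otimes> (?a \<otimes> (?b \<otimes> ?c))))"
    by (simp add: aw_center_move aw_center_beta)
  moreover have "eqv q (?W \<otimes> (aw_beta q \<otimes> (?a \<otimes> (?b \<otimes> ?c)))) (?W \<otimes> (?a \<otimes> (aw_beta q \<otimes> (?b \<otimes> ?c))))"
    by (simp add: aw_center_move aw_center_beta eqv_lmult)
  ultimately show ?thesis by (simp add: nc_mult_assoc eqv_trans)
qed

lemma gamma_mult_pbw_elem: "eqv q (aw_gamma q \<otimes> pbw_elem (Mon i j k r s t)) (pbw_elem (Mon i j k r s (Suc t)))"
proof -
  let ?W = "nc_word (abc_word i j k)" and ?a = "nc_pow (aw_alpha q) r" and ?b = "nc_pow (aw_beta q) s" and ?c = "nc_pow (aw_gamma q) t"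
  have "eqv q (aw_gamma q \<otimes> (?W \<otimes> (?a \<otimes> (?b \<otimes> ?c)))) (?W \<otimes> (aw_gamma q \<otimes> (?a \<otimes> (?b \<otimes> ?c))))"
    by (simp add: aw_center_move aw_center_gamma)
  moreover have "eqv q (?W \<otimes> (aw_gamma q \<otimes> (?a \<otimes> (?b \<otimes> ?c)))) (?W \<otimes> (?a \<otimes> (aw_gamma q \<otimes> (?b \<otimes> ?c))))"
    by (simp add: aw_center_move aw_center_gamma eqv_lmult)
  moreover have "eqv q (?W \<otimes> (?a \<otimes> (aw_gamma q \<otimes> (?b \<otimes> ?c)))) (?W \<otimes> (?a \<otimes> (?b \<otimes> (aw_gamma q \<otimes> ?c))))"
    by (simp add: aw_center_move aw_center_gamma eqv_lmult)
  ultimately show ?thesis by (simp add: nc_mult_assoc eqv_trans)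
qed

declare pbw_elem.simps[simp del]

definition "opB_lifts m \<longleftrightarrow> eqv q (nc_var GB \<otimes> pbw_elem m) (pbw_poly (opB (unit_vec m)))"

definition "opC_lifts m \<longleftrightarrow> eqv q (nc_var GC \<otimes> pbw_elem m) (pbw_poly (opC (unit_vec m)))"

lemma gA_mult_pbw_elem_eq: "nc_var GA \<otimes> pbw_elem m = pbw_poly (opA (unit_vec m))"
  by (cases m) (simp del: pbw_elem.simps add: unit_vec_succA[symmetric] pbw_poly_unit_vec gA_mult_pbw_elem)

lemma gA_mult_pbw_poly: "vfin v \<Longrightarrow> eqv q (nc_var GA \<otimes> pbw_poly v) (pbw_poly (opA v))"
  by (rule pbw_poly_lin_eqv[OF lin_opA]) (auto simp: gA_mult_pbw_elem_eq eqv_refl)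

lemma alpha_mult_pbw_elem_eqv: "eqv q (aw_alpha q \<otimes> pbw_elem m) (pbw_poly (op_alpha (unit_vec m)))"
  by (cases m) (simp del: pbw_elem.simps add: push_unit_vec inj_central_shift pbw_poly_unit_vec alpha_mult_pbw_elem)

lemma beta_mult_pbw_elem_eqv: "eqv q (aw_beta q \<otimes> pbw_elem m) (pbw_poly (op_beta (unit_vec m)))"
  by (cases m) (simp del: pbw_elem.simps add: push_unit_vec inj_central_shift pbw_poly_unit_vec beta_mult_pbw_elem)

lemma gamma_mult_pbw_elem_eqv: "eqv q (aw_gamma q \<otimes> pbw_elem m) (pbw_poly (op_gamma (unit_vec m)))"
  by (cases m) (simp del: pbw_elem.simps add: push_unit_vec inj_central_shift pbw_poly_unit_vec gamma_mult_pbw_elem)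

lemmas [trans] = eqv_trans

lemma gB_mult_pbw_poly: assumes "vfin v" "\<And>m. v m \<noteq> 0 \<Longrightarrow> opB_lifts m" shows "eqv q (nc_var GB \<otimes> pbw_poly v) (pbw_poly (opB v))"
  by (rule pbw_poly_lin_eqv[OF lin_opB assms(1)]) (use assms(2) in \<open>auto simp: opB_lifts_def\<close>)

lemma gC_mult_pbw_poly: assumes "vfin v" "\<And>m. v m \<noteq> 0 \<Longrightarrow> opC_lifts m" shows "eqv q (nc_var GC \<otimes> pbw_poly v) (pbw_poly (opC v))"
  by (rule pbw_poly_lin_eqv[OF lin_opC assms(1)]) (use assms(2) in \<open>auto simp: opC_lifts_def\<close>)

lemma opB_lifts_A0: "opB_lifts (Mon 0 j k r s t)"
  by (simp add: opB_lifts_def opB_def opB_mon_A0 pbw_poly_unit_vec gB_mult_pbw_elem eqv_refl)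

lemma opB_lifts_AS:
  assumes ih: "opB_lifts (Mon i j k r s t)" "opC_lifts (Mon i j k r s t)"
  shows "opB_lifts (Mon (Suc i) j k r s t)"
proof -
  let ?m = "Mon i j k r s t"
  let ?e = "unit_vec ?m :: 'a vec"
  have "eqv q (nc_var GB \<otimes> pbw_elem (Mon (Suc i) j k r s t)) ((nc_var GB \<otimes> nc_var GA) \<otimes> pbw_elem ?m)"
    by (intro eqv_eq) (simp add: gA_mult_pbw_elem[symmetric] nc_mult_assoc)
  also have "eqv q \<dots> (q^2 \<cdot> (nc_var GA \<otimes> (nc_var GB \<otimes> pbw_elem ?m)) - k1 \<cdot> (aw_gamma q \<otimes> pbw_elem ?m)
      + k2 \<cdot> (nc_var GC \<otimes> pbw_elem ?m))"
    by (intro eqv_eq) (simp add: gB_gA_reorder nc_mult_add_left nc_mult_diff_left nc_mult_smult_left nc_mult_assoc)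
  also have "eqv q \<dots> (q^2 \<cdot> (nc_var GA \<otimes> pbw_poly (opB ?e)) - k1 \<cdot> pbw_poly (op_gamma ?e) + k2 \<cdot> pbw_poly (opC ?e))"
    using ih by (intro eqv_add eqv_diff eqv_smult eqv_lmult gamma_mult_pbw_elem_eqv)
      (auto simp: opB_lifts_def opC_lifts_def)
  also have "eqv q \<dots> (q^2 \<cdot> pbw_poly (opA (opB ?e)) - k1 \<cdot> pbw_poly (op_gamma ?e) + k2 \<cdot> pbw_poly (opC ?e))"
    by (intro eqv_add eqv_diff eqv_smult eqv_refl gA_mult_pbw_poly) simp
  also have "\<dots> = pbw_poly (opB (opA ?e))"
    by (simp add: opB_opA pbw_poly_add pbw_poly_diff pbw_poly_vscale)
  finally show ?thesis by (simp add: opB_lifts_def push_unit_vec inj_succA)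
qed

lemma opC_lifts_00: "opC_lifts (Mon 0 0 k r s t)"
  by (simp add: opC_lifts_def opC_def opC_mon_00 pbw_poly_unit_vec gC_mult_pbw_elem eqv_refl)

lemma opC_lifts_AS:
  assumes ih: "opB_lifts (Mon i j k r s t)" "opC_lifts (Mon i j k r s t)"
  shows "opC_lifts (Mon (Suc i) j k r s t)"
proof -
  let ?m = "Mon i j k r s t"
  let ?e = "unit_vec ?m :: 'a vec"
  have "eqv q (nc_var GC \<otimes> pbw_elem (Mon (Suc i) j k r s t)) ((nc_var GC \<otimes> nc_var GA) \<otimes> pbw_elem ?m)"
    by (intro eqv_eq) (simp add: gA_mult_pbw_elem[symmetric] nc_mult_assoc)
  also have "eqv q \<dots> (inverse (q^2) \<cdot> (nc_var GA \<otimes> (nc_var GC \<otimes> pbw_elem ?m))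
      + k3 \<cdot> (aw_beta q \<otimes> pbw_elem ?m) - k4 \<cdot> (nc_var GB \<otimes> pbw_elem ?m))"
    by (intro eqv_eq) (simp add: gC_gA_reorder nc_mult_add_left nc_mult_diff_left nc_mult_smult_left nc_mult_assoc)
  also have "eqv q \<dots> (inverse (q^2) \<cdot> (nc_var GA \<otimes> pbw_poly (opC ?e)) + k3 \<cdot> pbw_poly (op_beta ?e)
      - k4 \<cdot> pbw_poly (opB ?e))"
    using ih by (intro eqv_add eqv_diff eqv_smult eqv_lmult beta_mult_pbw_elem_eqv)
      (auto simp: opB_lifts_def opC_lifts_def)
  also have "eqv q \<dots> (inverse (q^2) \<cdot> pbw_poly (opA (opC ?e)) + k3 \<cdot> pbw_poly (op_beta ?e)
      - k4 \<cdot> pbw_poly (opB ?e))"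
    by (intro eqv_add eqv_diff eqv_smult eqv_refl gA_mult_pbw_poly) simp
  also have "\<dots> = pbw_poly (opC (opA ?e))"
    by (simp add: opC_opA pbw_poly_add pbw_poly_diff pbw_poly_vscale)
  finally show ?thesis by (simp add: opC_lifts_def push_unit_vec inj_succA)
qed

lemma opC_lifts_0S:
  assumes ih: "opC_lifts (Mon 0 j k r s t)"
    and IHB: "\<And>m'. deg m' \<le> Suc (j + k) \<Longrightarrow> opB_lifts m'"
  shows "opC_lifts (Mon 0 (Suc j) k r s t)"
proof -
  let ?m = "Mon 0 j k r s t"
  let ?e = "unit_vec ?m :: 'a vec"
  have supp: "opB_lifts m1" if "opC ?e m1 \<noteq> 0" for m1
    using that deg_le_opC_mon[of ?m] by (auto simp: opC_def deg_le_def intro: IHB)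
  have "eqv q (nc_var GC \<otimes> pbw_elem (Mon 0 (Suc j) k r s t)) ((nc_var GC \<otimes> nc_var GB) \<otimes> pbw_elem ?m)"
    by (intro eqv_eq) (simp add: gB_mult_pbw_elem[symmetric] nc_mult_assoc)
  also have "eqv q \<dots> (q^2 \<cdot> (nc_var GB \<otimes> (nc_var GC \<otimes> pbw_elem ?m)) - k1 \<cdot> (aw_alpha q \<otimes> pbw_elem ?m)
      + k2 \<cdot> (nc_var GA \<otimes> pbw_elem ?m))"
    by (intro eqv_eq) (simp add: gC_gB_reorder nc_mult_add_left nc_mult_diff_left nc_mult_smult_left nc_mult_assoc)
  also have "eqv q \<dots> (q^2 \<cdot> (nc_var GB \<otimes> pbw_poly (opC ?e)) - k1 \<cdot> pbw_poly (op_alpha ?e) + k2 \<cdot> pbw_poly (opA ?e))"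
    using ih by (intro eqv_add eqv_diff eqv_smult eqv_lmult alpha_mult_pbw_elem_eqv)
      (auto simp: opC_lifts_def gA_mult_pbw_elem_eq eqv_refl)
  also have "eqv q \<dots> (q^2 \<cdot> pbw_poly (opB (opC ?e)) - k1 \<cdot> pbw_poly (op_alpha ?e) + k2 \<cdot> pbw_poly (opA ?e))"
    by (intro eqv_add eqv_diff eqv_smult eqv_refl gB_mult_pbw_poly supp) simp
  also have "\<dots> = pbw_poly (opC (opB ?e))"
    by (simp add: opC_opB pbw_poly_add pbw_poly_diff pbw_poly_vscale)
  finally show ?thesis by (simp add: opC_lifts_def opB_def opB_mon_A0)
qed

lemma opBC_lifts: "opB_lifts m \<and> opC_lifts m"
proof (induction "deg m" arbitrary: m rule: less_induct)
  case less
  have B: "opB_lifts m'" if "deg m' \<le> deg m" for m'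
  proof (cases m')
    case (Mon i j k r s t)
    then show ?thesis using less that
      by (cases i) (auto simp: opB_lifts_A0 intro!: opB_lifts_AS)
  qed
  obtain i j k r s t where m: "m = Mon i j k r s t" by (cases m)
  consider i' where "i = Suc i'" | j' where "i = 0" "j = Suc j'" | "i = 0" "j = 0"
    by (cases i; cases j) auto
  then have "opC_lifts m"
  proof cases
    case 1 then show ?thesis using less m by (auto intro!: opC_lifts_AS)
  next
    case 2 then show ?thesis using less m B by (auto intro!: opC_lifts_0S)
  next
    case 3 then show ?thesis using m by (simp add: opC_lifts_00)
  qed
  then show ?case using B by blast
qed

lemma nc_word_eqv_pbw_poly: "eqv q (nc_word w) (pbw_poly (word_op w vacuum))"
proof (induction w)
  case Nil
  then show ?case by (simp add: pbw_poly_unit_vec pbw_elem.simps abc_word_def nc_mult_one_left eqv_refl flip: nc_one_eq_nc_word)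
next
  case (Cons g w)
  let ?v = "word_op w vacuum :: 'a vec"
  have v: "vfin ?v" by (simp add: lin_vfin[OF lin_word_op])
  have "eqv q (nc_word (g # w)) (nc_var g \<otimes> pbw_poly ?v)"
    using Cons by (simp add: nc_var_mult_nc_word[symmetric] eqv_lmult)
  also have "eqv q \<dots> (pbw_poly (gen_op g ?v))"
    using v opBC_lifts by (cases g) (auto intro: gA_mult_pbw_poly gB_mult_pbw_poly gC_mult_pbw_poly)
  finally show ?case by simp
qed

definition "pbw_coords x = rho x vacuum"

lemma vfin_pbw_coords[simp]: "vfin (pbw_coords x)" by (simp add: pbw_coords_def)

lemma eqv_pbw_poly_coords: assumes "fin x" shows "eqv q x (pbw_poly (pbw_coords x))"
proof -
  let ?S = "{w. x w \<noteq> 0}"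
  let ?e = "vacuum :: 'a vec"
  have "eqv q (\<Sum>w\<in>?S. x w \<cdot> nc_word w) (\<Sum>w\<in>?S. x w \<cdot> pbw_poly (word_op w ?e))"
    by (intro eqv_sum eqv_smult nc_word_eqv_pbw_poly)
  moreover have "(\<Sum>w\<in>?S. x w \<cdot> pbw_poly (word_op w ?e)) = pbw_poly (pbw_coords x)"
    by (simp add: pbw_coords_def rho_def pbw_poly_sum pbw_poly_vscale lin_vfin[OF lin_word_op])
  ultimately show ?thesis using nc_poly_decomp[OF assms] by simp
qed

lemma aw_ideal_iff_pbw_coords: "fin x \<Longrightarrow> x \<in> aw_ideal q \<longleftrightarrow> pbw_coords x = 0"
proof
  assume "x \<in> aw_ideal q" then show "pbw_coords x = 0" by (simp add: pbw_coords_def rho_aw_ideal)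
next
  assume f: "fin x" and n: "pbw_coords x = 0"
  have "eqv q x (pbw_poly (pbw_coords x))" by (rule eqv_pbw_poly_coords[OF f])
  then show "x \<in> aw_ideal q" using n by (simp add: eqv_def pbw_poly_zero)
qed

lemma pbw_coords_diff: "fin x \<Longrightarrow> fin y \<Longrightarrow> pbw_coords (x - y) = pbw_coords x - pbw_coords y"
  by (simp add: pbw_coords_def rho_diff)

lemma pbw_coords_sum: "(\<And>i. i \<in> S \<Longrightarrow> fin (f i)) \<Longrightarrow> pbw_coords (sum f S) = (\<Sum>i\<in>S. pbw_coords (f i))"
  by (simp add: pbw_coords_def rho_sum)

lemma pbw_coords_smult: "fin x \<Longrightarrow> pbw_coords (c \<cdot> x) = vscale c (pbw_coords x)"
  by (simp add: pbw_coords_def rho_smult)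

lemma rho_nc_pow_alpha: "vfin w \<Longrightarrow> rho (nc_pow (aw_alpha q) n) w = shift_op n 0 0 w"
  by (induction n) (simp_all add: rho_one shift_op_0 rho_mult rho_alpha shift_op_shift_op)

lemma rho_nc_pow_beta: "vfin w \<Longrightarrow> rho (nc_pow (aw_beta q) n) w = shift_op 0 n 0 w"
  by (induction n) (simp_all add: rho_one shift_op_0 rho_mult rho_beta shift_op_shift_op)

lemma rho_nc_pow_gamma: "vfin w \<Longrightarrow> rho (nc_pow (aw_gamma q) n) w = shift_op 0 0 n w"
  by (induction n) (simp_all add: rho_one shift_op_0 rho_mult rho_gamma shift_op_shift_op)

lemma rho_pbw_elem: "vfin w \<Longrightarrow> rho (pbw_elem (Mon i j k r s t)) w = word_op (abc_word i j k) (shift_op r s t w)"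
  by (simp add: pbw_elem.simps rho_nc_word_mult rho_mult rho_nc_pow_alpha rho_nc_pow_beta rho_nc_pow_gamma shift_op_shift_op rho_nc_word)

lemma rho_pbw_poly: assumes "vfin v" "vfin w" shows "rho (pbw_poly v) w = (\<Sum>m\<in>{m. v m \<noteq> 0}. vscale (v m) (rho (pbw_elem m) w))"
  by (simp add: pbw_poly_def rho_sum rho_smult)

lemma rho_pbw_coords: assumes "fin x" "vfin w" shows "rho x w = rho (pbw_poly (pbw_coords x)) w"
proof -
  have "x - pbw_poly (pbw_coords x) \<in> aw_ideal q" using eqv_pbw_poly_coords[OF assms(1)] by (simp add: eqv_def)
  then have "rho (x - pbw_poly (pbw_coords x)) w = 0" using assms(2) by (rule rho_aw_ideal)
  then show ?thesis using assms by (simp add: rho_diff)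
qed

section \<open>Centrality of Omega\<close>

definition "opOmega v = vscale q (opA (opB (opC v))) + vscale (q^2) (opA (opA v)) + vscale (inverse (q^2)) (opB (opB v))
   + vscale (q^2) (opC (opC v)) - vscale q (opA (op_alpha v)) - vscale (inverse q) (opB (op_beta v)) - vscale q (opC (op_gamma v))"

lemma rho_Omega: "vfin v \<Longrightarrow> rho (aw_Omega q) v = opOmega v"
  by (simp add: aw_Omega_def opOmega_def rho_add rho_diff rho_smult rho_mult rho_var rho_alpha rho_beta rho_gamma)

lemma opB_add: "vfin u \<Longrightarrow> vfin w \<Longrightarrow> opB (u + w) = opB u + opB w" by (rule lin_add[OF lin_opB])

lemma opB_diff: "vfin u \<Longrightarrow> vfin w \<Longrightarrow> opB (u - w) = opB u - opB w" by (rule lin_diff[OF lin_opB])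

lemma opB_vscale: "vfin u \<Longrightarrow> opB (vscale c u) = vscale c (opB u)" by (rule lin_vscale[OF lin_opB])

lemma opC_add: "vfin u \<Longrightarrow> vfin w \<Longrightarrow> opC (u + w) = opC u + opC w" by (rule lin_add[OF lin_opC])

lemma opC_diff: "vfin u \<Longrightarrow> vfin w \<Longrightarrow> opC (u - w) = opC u - opC w" by (rule lin_diff[OF lin_opC])

lemma opC_vscale: "vfin u \<Longrightarrow> opC (vscale c u) = vscale c (opC u)" by (rule lin_vscale[OF lin_opC])

text \<open>Rewriting with the reordering relations brings a word in the operators into the order
  \<open>A, B, C\<close> followed by the shifts; the commutation identities for \<open>\<Omega>\<close> then reduce to
  identities between scalar coefficients.\<close>

lemmas op_normalize_simps = shift_op_shift_op opB_add opB_diff opB_vscale opC_add opC_diff opC_vscale push_add push_diff push_vscale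
  opC_opB opB_opA opC_opA opA_shift_op[symmetric] opB_shift_op[symmetric] opC_shift_op[symmetric] vscale_vscale vscale_add vscale_diff

lemma opOmega_opA: assumes "vfin v" shows "opOmega (opA v) = opA (opOmega v)"
proof (rule ext)
  show "opOmega (opA v) x = opA (opOmega v) x" for x
    using assms by (simp add: opOmega_def op_normalize_simps vscale_apply k_defs field_simps q0)
      (simp add: algebra_simps eval_nat_numeral)
qed

lemma opOmega_opB: assumes "vfin v" shows "opOmega (opB v) = opB (opOmega v)"
proof (rule ext)
  show "opOmega (opB v) x = opB (opOmega v) x" for x
    using assms by (simp add: opOmega_def op_normalize_simps vscale_apply k_defs field_simps q0)
      (simp add: algebra_simps eval_nat_numeral)
qed

lemma opOmega_opC: assumes "vfin v" shows "opOmega (opC v) = opC (opOmega v)"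
proof (rule ext)
  show "opOmega (opC v) x = opC (opOmega v) x" for x
    using assms by (simp add: opOmega_def op_normalize_simps vscale_apply k_defs field_simps q0)
      (simp add: algebra_simps eval_nat_numeral)
qed

lemma aw_center_Omega: "aw_Omega q \<in> aw_center q"
proof (rule aw_centerI)
  show "fin (aw_Omega q)" by simp
  fix g
  let ?e = "vacuum :: 'a vec"
  have "pbw_coords (aw_Omega q \<otimes> nc_var g - nc_var g \<otimes> aw_Omega q) = opOmega (gen_op g ?e) - gen_op g (opOmega ?e)"
    by (simp add: pbw_coords_def rho_diff rho_mult rho_var rho_Omega lin_vfin[OF lin_gen_op])
  also have "\<dots> = 0" by (cases g) (simp_all add: opOmega_opA opOmega_opB opOmega_opC)
  finally have "aw_Omega q \<otimes> nc_var g - nc_var g \<otimes> aw_Omega q \<in> aw_ideal q"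
    by (subst aw_ideal_iff_pbw_coords) simp_all
  then show "commutes q (aw_Omega q) (nc_var g)" by (simp add: commutes_def eqv_def)
qed

lemmas gen_subalg_center = gen_subalg_in_center[OF aw_center_Omega]

section \<open>Leading terms\<close>

definition "lcC i j = q^(2*j) * inverse (q^(2*i))"

lemma deg_le_opB: assumes "deg_le d v" shows "deg_le (Suc d) (opB v)"
  unfolding opB_def
proof (rule deg_le_extend[OF assms])
  fix m assume "v m \<noteq> 0"
  then have "deg m \<le> d" using assms by (simp add: deg_le_def)
  then show "deg_le (Suc d) (opB_mon m)" using deg_le_mono[OF deg_le_opB_mon[of m]] by simp
qed

lemma deg_le_opC: assumes "deg_le d v" shows "deg_le (Suc d) (opC v)"
  unfolding opC_def
proof (rule deg_le_extend[OF assms])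
  fix m assume "v m \<noteq> 0"
  then have "deg m \<le> d" using assms by (simp add: deg_le_def)
  then show "deg_le (Suc d) (opC_mon m)" using deg_le_mono[OF deg_le_opC_mon[of m]] by simp
qed

lemma opB_mon_lead: "lead_term (deg (Mon i j k r s t)) (opB_mon (Mon i j k r s t)) (q^(2*i)) (Mon i (Suc j) k r s t)"
proof (induction i)
  case 0 then show ?case by (simp add: opB_mon_A0 lead_term_def deg_le_def vscale_def)
next
  case (Suc i)
  let ?m = "Mon i j k r s t" and ?c = "q^(2*i)" and ?t = "Mon i (Suc j) k r s t"
  have IH: "deg_le (deg ?m) (opB_mon ?m - vscale ?c (unit_vec ?t))" using Suc.IH by (simp add: lead_term_def)
  have "opB_mon (Mon (Suc i) j k r s t) - vscale (q^(2*Suc i)) (unit_vec (Mon (Suc i) (Suc j) k r s t)) =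
      vscale (q^2) (opA (opB_mon ?m - vscale ?c (unit_vec ?t))) - vscale k1 (unit_vec (Mon i j k r s (Suc t)))
      + vscale k2 (opC_mon ?m)"
    by (simp add: opB_mon_AS push_diff push_vscale push_unit_vec inj_succA vscale_vscale fun_eq_iff vscale_apply
        power_add power_mult)
      (simp add: algebra_simps power2_eq_square)
  moreover have "deg_le (deg (Mon (Suc i) j k r s t)) \<dots>"
    using deg_le_opA[OF IH] deg_le_opC_mon[of ?m]
    by (intro deg_le_add deg_le_diff deg_le_vscale deg_le_unit_vec) simp_all
  ultimately show ?case by (simp add: lead_term_def)
qed

lemma opC_mon_lead_A0: "lead_term (deg (Mon 0 j k r s t)) (opC_mon (Mon 0 j k r s t)) (q^(2*j)) (Mon 0 j (Suc k) r s t)"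
proof (induction j)
  case 0 then show ?case by (simp add: opC_mon_00 lead_term_def deg_le_def vscale_def)
next
  case (Suc j)
  let ?m = "Mon 0 j k r s t" and ?c = "q^(2*j)" and ?t = "Mon 0 j (Suc k) r s t"
  have IH: "deg_le (deg ?m) (opC_mon ?m - vscale ?c (unit_vec ?t))" using Suc.IH by (simp add: lead_term_def)
  have "opC_mon (Mon 0 (Suc j) k r s t) - vscale (q^(2 * Suc j)) (unit_vec (Mon 0 (Suc j) (Suc k) r s t)) =
     vscale (q^2) (opB (opC_mon ?m - vscale ?c (unit_vec ?t))) - vscale k1 (unit_vec (Mon 0 j k (Suc r) s t)) + vscale k2 (unit_vec (Mon 1 j k r s t))"
    by (simp add: opC_mon_0S opB_diff opB_vscale opB_def[symmetric] opB_mon_A0 fun_eq_iff vscale_apply algebra_simps power_add power_mult)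
       (simp add: opB_def opB_mon_A0 algebra_simps power2_eq_square)
  moreover have "deg_le (deg (Mon 0 (Suc j) k r s t)) \<dots>"
    using deg_le_opB[OF IH]
    by (intro deg_le_add deg_le_diff deg_le_vscale deg_le_unit_vec) simp_all
  ultimately show ?case by (simp add: lead_term_def)
qed

lemma opC_mon_lead: "lead_term (deg (Mon i j k r s t)) (opC_mon (Mon i j k r s t)) (lcC i j) (Mon i j (Suc k) r s t)"
proof (induction i)
  case 0 then show ?case using opC_mon_lead_A0 by (simp add: lcC_def)
next
  case (Suc i)
  let ?m = "Mon i j k r s t" and ?c = "lcC i j" and ?t = "Mon i j (Suc k) r s t"
  have IH: "deg_le (deg ?m) (opC_mon ?m - vscale ?c (unit_vec ?t))" using Suc.IH by (simp add: lead_term_def)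
  have cs: "lcC (Suc i) j = inverse (q^2) * lcC i j"
    by (simp add: lcC_def power_add power_mult algebra_simps inverse_mult_distrib power2_eq_square)
  have "opC_mon (Mon (Suc i) j k r s t) - vscale (lcC (Suc i) j) (unit_vec (Mon (Suc i) j (Suc k) r s t)) =
     vscale (inverse (q^2)) (opA (opC_mon ?m - vscale ?c (unit_vec ?t))) + vscale k3 (unit_vec (Mon i j k r (Suc s) t)) - vscale k4 (opB_mon ?m)"
    unfolding cs
    by (simp add: opC_mon_AS push_diff push_vscale push_unit_vec inj_succA vscale_vscale fun_eq_iff vscale_apply algebra_simps)
  moreover have "deg_le (deg (Mon (Suc i) j k r s t)) \<dots>"
    using deg_le_opA[OF IH] deg_le_opB_mon[of ?m]
    by (intro deg_le_add deg_le_diff deg_le_vscale deg_le_unit_vec) simp_all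
  ultimately show ?case by (simp add: lead_term_def)
qed

lemma lead_term_opB: assumes w: "vfin w" and a: "lead_term d w c (Mon i j k r s t)" and dm: "i + j + k = Suc d"
  shows "lead_term (Suc d) (opB w) (c * q^(2*i)) (Mon i (Suc j) k r s t)"
proof -
  let ?m = "Mon i j k r s t"
  have "opB w - vscale (c * q^(2*i)) (unit_vec (Mon i (Suc j) k r s t)) =
        opB (w - vscale c (unit_vec ?m)) + vscale c (opB_mon ?m - vscale (q^(2*i)) (unit_vec (Mon i (Suc j) k r s t)))"
    using w by (simp add: opB_diff opB_vscale opB_def[symmetric] fun_eq_iff vscale_apply algebra_simps) (simp add: opB_def)
  moreover have "deg_le (Suc d) \<dots>"
    using deg_le_opB[OF a[unfolded lead_term_def]] opB_mon_lead[of i j k r s t, unfolded lead_term_def] dm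
    by (intro deg_le_add deg_le_vscale) simp_all
  ultimately show ?thesis by (simp add: lead_term_def)
qed

lemma lead_term_opC: assumes w: "vfin w" and a: "lead_term d w c (Mon i j k r s t)" and dm: "i + j + k = Suc d"
  shows "lead_term (Suc d) (opC w) (c * lcC i j) (Mon i j (Suc k) r s t)"
proof -
  let ?m = "Mon i j k r s t"
  have "opC w - vscale (c * lcC i j) (unit_vec (Mon i j (Suc k) r s t)) =
        opC (w - vscale c (unit_vec ?m)) + vscale c (opC_mon ?m - vscale (lcC i j) (unit_vec (Mon i j (Suc k) r s t)))"
    using w by (simp add: opC_diff opC_vscale opC_def[symmetric] fun_eq_iff vscale_apply algebra_simps) (simp add: opC_def)
  moreover have "deg_le (Suc d) \<dots>"
    using deg_le_opC[OF a[unfolded lead_term_def]] opC_mon_lead[of i j k r s t, unfolded lead_term_def] dm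
    by (intro deg_le_add deg_le_vscale) simp_all
  ultimately show ?thesis by (simp add: lead_term_def)
qed

lemma lead_term_opA: assumes a: "lead_term d w c (Mon i j k r s t)"
  shows "lead_term (Suc d) (opA w) c (Mon (Suc i) j k r s t)"
proof -
  have "opA w - vscale c (unit_vec (Mon (Suc i) j k r s t)) = opA (w - vscale c (unit_vec (Mon i j k r s t)))"
    by (simp add: push_diff push_vscale push_unit_vec inj_succA)
  then show ?thesis using deg_le_opA[OF a[unfolded lead_term_def]] by (simp add: lead_term_def)
qed

lemma lead_term_opC_pow: assumes w: "vfin w" and a: "lead_term d w c (Mon i j k r s t)" and dm: "i + j + k = Suc d"
  shows "lead_term (d + n) (word_op (replicate n GC) w) (c * lcC i j ^ n) (Mon i j (k + n) r s t)"
proof (induction n)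
  case 0 then show ?case using a by simp
next
  case (Suc n)
  have "lead_term (Suc (d + n)) (opC (word_op (replicate n GC) w)) (c * lcC i j ^ n * lcC i j) (Mon i j (Suc (k + n)) r s t)"
    by (rule lead_term_opC) (use Suc w dm in auto)
  then show ?case by (simp add: algebra_simps)
qed

lemma lead_term_opB_pow: assumes w: "vfin w" and a: "lead_term d w c (Mon i j k r s t)" and dm: "i + j + k = Suc d"
  shows "lead_term (d + n) (word_op (replicate n GB) w) (c * (q^(2*i)) ^ n) (Mon i (j + n) k r s t)"
proof (induction n)
  case 0 then show ?case using a by simp
next
  case (Suc n)
  have "lead_term (Suc (d + n)) (opB (word_op (replicate n GB) w)) (c * (q^(2*i)) ^ n * q^(2*i)) (Mon i (Suc (j + n)) k r s t)"
    by (rule lead_term_opB) (use Suc w dm in auto)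
  then show ?case by (simp add: algebra_simps)
qed

lemma lead_term_opA_pow: assumes a: "lead_term d w c (Mon i j k r s t)"
  shows "lead_term (d + n) (word_op (replicate n GA) w) c (Mon (i + n) j k r s t)"
proof (induction n)
  case 0 then show ?case using a by simp
next
  case (Suc n)
  have "lead_term (Suc (d + n)) (opA (word_op (replicate n GA) w)) c (Mon (Suc (i + n)) j k r s t)"
    by (rule lead_term_opA) (use Suc in auto)
  then show ?case by simp
qed

lemma word_op_abc_word: "word_op (abc_word i j k) w = word_op (replicate i GA) (word_op (replicate j GB) (word_op (replicate k GC) w))"
  by (simp add: abc_word_def word_op_append)

lemma lead_term_abc_word_A: "lead_term (i + j + k) (word_op (abc_word i j k) (unit_vec (Mon 1 0 0 r s t))) (inverse (q^2) ^ k * (q^2) ^ j) (Mon (Suc i) j k r s t)"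
proof -
  have vac: "lead_term 0 (unit_vec (Mon 1 0 0 r s t)) 1 (Mon 1 0 0 r s t)" by (rule lead_term_unit_vec) simp
  have after_C: "lead_term k (word_op (replicate k GC) (unit_vec (Mon 1 0 0 r s t))) (inverse (q^2) ^ k) (Mon 1 0 k r s t)"
    using lead_term_opC_pow[OF vfin_unit_vec vac, of k] by (simp add: lcC_def)
  have after_BC: "lead_term (k + j) (word_op (replicate j GB) (word_op (replicate k GC) (unit_vec (Mon 1 0 0 r s t)))) (inverse (q^2) ^ k * (q^2) ^ j) (Mon 1 j k r s t)"
    using lead_term_opB_pow[OF vfin_word_op[OF vfin_unit_vec] after_C, of j] by simp
  have after_ABC: "lead_term (k + j + i) (word_op (replicate i GA) (word_op (replicate j GB) (word_op (replicate k GC) (unit_vec (Mon 1 0 0 r s t))))) (inverse (q^2) ^ k * (q^2) ^ j) (Mon (1 + i) j k r s t)"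
    using lead_term_opA_pow[OF after_BC, of i] by simp
  then show ?thesis by (simp add: word_op_abc_word algebra_simps)
qed

lemma abc_word_unit_vec_C: "word_op (abc_word i j k) (unit_vec (Mon 0 0 (Suc 0) r s t)) = unit_vec (Mon i j (Suc k) r s t)"
proof -
  have c: "word_op (replicate k GC) (unit_vec (Mon 0 0 (Suc 0) r s t)) = unit_vec (Mon 0 0 (Suc k) r s t)"
    by (induction k) (simp_all add: opC_def opC_mon_00)
  have b: "word_op (replicate j GB) (unit_vec (Mon 0 0 (Suc k) r s t)) = unit_vec (Mon 0 j (Suc k) r s t)"
    by (induction j) (simp_all add: opB_def opB_mon_A0)
  have a: "word_op (replicate i GA) (unit_vec (Mon 0 j (Suc k) r s t)) = unit_vec (Mon i j (Suc k) r s t)"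
    by (induction i) (simp_all add: push_unit_vec inj_succA)
  show ?thesis by (simp add: word_op_abc_word c b a)
qed

section \<open>Top coefficients of central elements\<close>

lemma rho_center_gen_op: assumes "x \<in> aw_center q" shows "rho x (gen_op g vacuum) = gen_op g (pbw_coords x)"
proof -
  have f: "fin x" using assms by (rule aw_center_fin)
  have "x \<otimes> nc_var g - nc_var g \<otimes> x \<in> aw_ideal q"
    using aw_center_commutes[OF assms, of "nc_var g"] by (simp add: commutes_def eqv_def)
  then have "pbw_coords (x \<otimes> nc_var g - nc_var g \<otimes> x) = 0" by (simp add: pbw_coords_def rho_aw_ideal)
  then show ?thesis using f by (simp add: pbw_coords_def rho_diff rho_mult rho_var)
qed

lemma opC_eq_sum: "vfin v \<Longrightarrow> opC v = (\<Sum>m\<in>{m. v m \<noteq> 0}. vscale (v m) (opC_mon m))"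
  unfolding opC_def by (rule extend_sum) (auto simp: vfin_def)

text \<open>Evaluate \<open>x C = C x\<close> and \<open>x A = A x\<close> on the vacuum at a top-degree monomial: letting
  \<open>C\<close> act first and then the PBW monomials of \<open>x\<close> multiplies their coefficients by \<open>1\<close>
  and \<open>q\<^bsup>-2k\<^esup> q\<^bsup>2j\<^esup>\<close> respectively, letting it act last multiplies them by \<open>lcC i j\<close> and \<open>1\<close>.\<close>

lemma center_top_C: assumes x: "x \<in> aw_center q" and low: "deg_le n (pbw_coords x)"
  and nz: "pbw_coords x (Mon i j k r s t) \<noteq> 0" and dn: "i + j + k = n"
  shows "lcC i j = 1"
proof -
  let ?v = "pbw_coords x" and ?S = "{m. pbw_coords x m \<noteq> 0}" and ?mt = "Mon i j (Suc k) r s t" and ?m = "Mon i j k r s t"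
  have f: "fin x" using x by (rule aw_center_fin)
  have S: "finite ?S" using vfin_pbw_coords[of x] by (simp add: vfin_def)
  have m0: "?m \<in> ?S" using nz by simp
  have e: "opC vacuum = unit_vec (Mon 0 0 (Suc 0) 0 0 0)" by (simp add: opC_def opC_mon_00)
  have "rho x (gen_op GC vacuum) = gen_op GC ?v" using rho_center_gen_op[OF x] .
  moreover have "rho x (unit_vec (Mon 0 0 (Suc 0) 0 0 0)) = rho (pbw_poly ?v) (unit_vec (Mon 0 0 (Suc 0) 0 0 0))"
    by (rule rho_pbw_coords[OF f vfin_unit_vec])
  ultimately have eq: "rho (pbw_poly ?v) (unit_vec (Mon 0 0 (Suc 0) 0 0 0)) = opC ?v" by (simp add: e)
  have lhs: "rho (pbw_poly ?v) (unit_vec (Mon 0 0 (Suc 0) 0 0 0)) ?mt = ?v ?m * 1"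
    unfolding rho_pbw_poly[OF vfin_pbw_coords vfin_unit_vec]
  proof (rule sum_vscale_single[OF S m0])
    fix m' assume "m' \<in> ?S"
    obtain i' j' k' r' s' t' where m': "m' = Mon i' j' k' r' s' t'" by (cases m')
    show "rho (pbw_elem m') (unit_vec (Mon 0 0 (Suc 0) 0 0 0)) ?mt = (if m' = ?m then 1 else 0)"
      by (simp add: m' rho_pbw_elem push_unit_vec inj_central_shift abc_word_unit_vec_C) (auto simp: unit_vec_def)
  qed
  have rhs: "opC ?v ?mt = ?v ?m * lcC i j"
    unfolding opC_eq_sum[OF vfin_pbw_coords]
  proof (rule sum_vscale_single[OF S m0])
    fix m' assume m'S: "m' \<in> ?S"
    obtain i' j' k' r' s' t' where m': "m' = Mon i' j' k' r' s' t'" by (cases m')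
    have dm': "deg m' \<le> n" using m'S low by (auto simp: deg_le_def)
    have "opC_mon m' ?mt = (if ?mt = Mon i' j' (Suc k') r' s' t' then lcC i' j' else 0)"
      using lead_term_apply[OF opC_mon_lead[of i' j' k' r' s' t']] dm' dn m' by simp
    then show "opC_mon m' ?mt = (if m' = ?m then lcC i j else 0)" using m' by auto
  qed
  have "?v ?m * 1 = ?v ?m * lcC i j" using eq lhs rhs by simp
  then show ?thesis using nz by simp
qed

lemma center_top_A: assumes x: "x \<in> aw_center q" and low: "deg_le n (pbw_coords x)"
  and nz: "pbw_coords x (Mon i j k r s t) \<noteq> 0" and dn: "i + j + k = n"
  shows "inverse (q^2) ^ k * (q^2) ^ j = 1"
proof -
  let ?v = "pbw_coords x" and ?S = "{m. pbw_coords x m \<noteq> 0}" and ?mt = "Mon (Suc i) j k r s t" and ?m = "Mon i j k r s t"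
  have f: "fin x" using x by (rule aw_center_fin)
  have S: "finite ?S" using vfin_pbw_coords[of x] by (simp add: vfin_def)
  have m0: "?m \<in> ?S" using nz by simp
  have e: "opA vacuum = unit_vec (Mon 1 0 0 0 0 0)" by (simp add: push_unit_vec inj_succA)
  have "rho x (gen_op GA vacuum) = gen_op GA ?v" using rho_center_gen_op[OF x] .
  moreover have "rho x (unit_vec (Mon 1 0 0 0 0 0)) = rho (pbw_poly ?v) (unit_vec (Mon 1 0 0 0 0 0))"
    by (rule rho_pbw_coords[OF f vfin_unit_vec])
  ultimately have eq: "rho (pbw_poly ?v) (unit_vec (Mon 1 0 0 0 0 0)) = opA ?v" by (simp only: e gen_op.simps)
  have lhs: "rho (pbw_poly ?v) (unit_vec (Mon 1 0 0 0 0 0)) ?mt = ?v ?m * (inverse (q^2) ^ k * (q^2) ^ j)"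
    unfolding rho_pbw_poly[OF vfin_pbw_coords vfin_unit_vec]
  proof (rule sum_vscale_single[OF S m0])
    fix m' assume m'S: "m' \<in> ?S"
    obtain i' j' k' r' s' t' where m': "m' = Mon i' j' k' r' s' t'" by (cases m')
    have dm': "deg m' \<le> n" using m'S low by (auto simp: deg_le_def)
    have r: "rho (pbw_elem m') (unit_vec (Mon 1 0 0 0 0 0)) = word_op (abc_word i' j' k') (unit_vec (Mon 1 0 0 r' s' t'))"
      by (simp add: m' rho_pbw_elem push_unit_vec inj_central_shift)
    have "rho (pbw_elem m') (unit_vec (Mon 1 0 0 0 0 0)) ?mt = (if ?mt = Mon (Suc i') j' k' r' s' t' then inverse (q^2) ^ k' * (q^2) ^ j' else 0)"
      unfolding r using lead_term_apply[OF lead_term_abc_word_A[of i' j' k' r' s' t']] dm' dn m' by simp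
    then show "rho (pbw_elem m') (unit_vec (Mon 1 0 0 0 0 0)) ?mt = (if m' = ?m then inverse (q^2) ^ k * (q^2) ^ j else 0)"
      using m' by auto
  qed
  have rhs: "opA ?v ?mt = ?v ?m" using push_apply[OF inj_succA, of ?v ?m] by simp
  have "?v ?m * (inverse (q^2) ^ k * (q^2) ^ j) = ?v ?m * 1" using eq lhs rhs by simp
  then show ?thesis using nz by simp
qed

section \<open>Powers of Omega\<close>

lemma vfin_opOmega[simp]: "vfin w \<Longrightarrow> vfin (opOmega w)"
  by (simp add: opOmega_def)

lemma vfin_opOmega_funpow[simp]: "vfin w \<Longrightarrow> vfin ((opOmega ^^ n) w)"
  by (induction n) auto

lemma opOmega_minus_lead: assumes a: "deg_le d w" shows "deg_le (Suc (Suc d)) (opOmega w - vscale q (opA (opB (opC w))))"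
proof -
  have mono: "\<And>u n. deg_le n u \<Longrightarrow> n \<le> Suc (Suc d) \<Longrightarrow> deg_le (Suc (Suc d)) u" by (rule deg_le_mono)
  have AA: "deg_le (Suc (Suc d)) (opA (opA w))" using mono[OF deg_le_opA[OF deg_le_opA[OF a]]] by simp
  have BB: "deg_le (Suc (Suc d)) (opB (opB w))" using mono[OF deg_le_opB[OF deg_le_opB[OF a]]] by simp
  have CC: "deg_le (Suc (Suc d)) (opC (opC w))" using mono[OF deg_le_opC[OF deg_le_opC[OF a]]] by simp
  have A_alpha: "deg_le (Suc (Suc d)) (opA (op_alpha w))" using mono[OF deg_le_opA[OF deg_le_shift_op[OF a]]] by simp
  have B_beta: "deg_le (Suc (Suc d)) (opB (op_beta w))" using mono[OF deg_le_opB[OF deg_le_shift_op[OF a]]] by simp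
  have C_gamma: "deg_le (Suc (Suc d)) (opC (op_gamma w))" using mono[OF deg_le_opC[OF deg_le_shift_op[OF a]]] by simp
  have e: "opOmega w - vscale q (opA (opB (opC w))) = vscale (q^2) (opA (opA w)) + vscale (inverse (q^2)) (opB (opB w))
   + vscale (q^2) (opC (opC w)) - vscale q (opA (op_alpha w)) - vscale (inverse q) (opB (op_beta w)) - vscale q (opC (op_gamma w))"
    by (simp add: opOmega_def fun_eq_iff)
  show ?thesis unfolding e using AA BB CC A_alpha B_beta C_gamma
    by (intro deg_le_add deg_le_diff deg_le_vscale)
qed

lemma lead_term_opOmega: assumes w: "vfin w" and a: "lead_term d w c (Mon l l l r s t)" and dl: "3 * l = Suc d"
  shows "lead_term (Suc (Suc (Suc d))) (opOmega w) (c * q^(2 * l + 1)) (Mon (Suc l) (Suc l) (Suc l) r s t)"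
proof -
  have aZ: "lead_term (Suc d) (opC w) (c * lcC l l) (Mon l l (Suc l) r s t)"
    by (rule lead_term_opC[OF w a]) (use dl in simp)
  have c1: "lcC l l = 1" using q0 by (simp add: lcC_def)
  have aY: "lead_term (Suc (Suc d)) (opB (opC w)) (c * lcC l l * q^(2*l)) (Mon l (Suc l) (Suc l) r s t)"
    by (rule lead_term_opB[OF vfin_opC[OF w] aZ]) (use dl in simp)
  have aX: "lead_term (Suc (Suc (Suc d))) (opA (opB (opC w))) (c * lcC l l * q^(2*l)) (Mon (Suc l) (Suc l) (Suc l) r s t)"
    by (rule lead_term_opA[OF aY])
  have lw: "deg_le (Suc d) w" by (rule lead_term_deg_le[OF a]) (use dl in simp_all)
  have rest: "deg_le (Suc (Suc (Suc d))) (opOmega w - vscale q (opA (opB (opC w))))"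
    using opOmega_minus_lead[OF lw] by (rule deg_le_mono) simp
  have e: "opOmega w - vscale (c * q^(2 * l + 1)) (unit_vec (Mon (Suc l) (Suc l) (Suc l) r s t)) =
      (opOmega w - vscale q (opA (opB (opC w)))) + vscale q (opA (opB (opC w)) - vscale (c * lcC l l * q^(2*l)) (unit_vec (Mon (Suc l) (Suc l) (Suc l) r s t)))"
    by (simp add: fun_eq_iff vscale_apply c1 algebra_simps)
  have "deg_le (Suc (Suc (Suc d))) (opOmega w - vscale (c * q^(2 * l + 1)) (unit_vec (Mon (Suc l) (Suc l) (Suc l) r s t)))"
    unfolding e using rest aX[unfolded lead_term_def] by (intro deg_le_add deg_le_vscale)
  then show ?thesis by (simp add: lead_term_def)
qed

lemma lead_term_opOmega_unit_vec: "lead_term 2 (opOmega (unit_vec (Mon 0 0 0 r s t))) q (Mon 1 1 1 r s t)"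
proof -
  let ?e = "unit_vec (Mon 0 0 0 r s t) :: 'a vec"
  have z: "opC ?e = unit_vec (Mon 0 0 1 r s t)" by (simp add: opC_def opC_mon_00)
  have aZ: "lead_term 0 (opC ?e) 1 (Mon 0 0 1 r s t)" unfolding z by (rule lead_term_unit_vec) simp
  have aY: "lead_term (Suc 0) (opB (opC ?e)) (1 * q^(2*0)) (Mon 0 (Suc 0) 1 r s t)"
    by (rule lead_term_opB[OF vfin_opC[OF vfin_unit_vec] aZ]) simp
  have aX: "lead_term (Suc (Suc 0)) (opA (opB (opC ?e))) (1 * q^(2*0)) (Mon (Suc 0) (Suc 0) 1 r s t)"
    by (rule lead_term_opA[OF aY])
  have rest: "deg_le (Suc (Suc 0)) (opOmega ?e - vscale q (opA (opB (opC ?e))))"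
    by (rule opOmega_minus_lead) (simp add: deg_le_unit_vec)
  have e: "opOmega ?e - vscale q (unit_vec (Mon 1 1 1 r s t)) =
      (opOmega ?e - vscale q (opA (opB (opC ?e)))) + vscale q (opA (opB (opC ?e)) - vscale (1 * q^(2*0)) (unit_vec (Mon (Suc 0) (Suc 0) 1 r s t)))"
    by (simp add: fun_eq_iff vscale_apply algebra_simps)
  have "deg_le 2 (opOmega ?e - vscale q (unit_vec (Mon 1 1 1 r s t)))"
    unfolding e using rest aX[unfolded lead_term_def] by (simp add: deg_le_add deg_le_vscale numeral_2_eq_2)
  then show ?thesis by (simp add: lead_term_def)
qed

fun lcOmega :: "nat \<Rightarrow> 'a" where
  "lcOmega 0 = 1" | "lcOmega (Suc l) = lcOmega l * q^(2 * l + 1)"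

lemma lcOmega_nonzero: "lcOmega l \<noteq> 0" using q0 by (induction l) auto

lemma lead_term_opOmega_pow: "lead_term (3 * Suc l - 1) ((opOmega ^^ Suc l) (unit_vec (Mon 0 0 0 r s t))) (lcOmega (Suc l)) (Mon (Suc l) (Suc l) (Suc l) r s t)"
proof (induction l)
  case 0 then show ?case using lead_term_opOmega_unit_vec by simp
next
  case (Suc l)
  have h: "lead_term (Suc (Suc (Suc (3 * Suc l - 1)))) (opOmega ((opOmega ^^ Suc l) (unit_vec (Mon 0 0 0 r s t)))) (lcOmega (Suc l) * q^(2 * Suc l + 1)) (Mon (Suc (Suc l)) (Suc (Suc l)) (Suc (Suc l)) r s t)"
    by (rule lead_term_opOmega[OF vfin_opOmega_funpow[OF vfin_unit_vec] Suc.IH]) simp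
  have eq: "3 * Suc (Suc l) - 1 = Suc (Suc (Suc (3 * Suc l - 1)))" by simp
  show ?case using h unfolding eq funpow.simps(2) o_apply lcOmega.simps(2) by assumption
qed

lemma top_term_opOmega_pow: "top_term (3 * l) ((opOmega ^^ l) (unit_vec (Mon 0 0 0 r s t))) (lcOmega l) (Mon l l l r s t)"
proof (cases l)
  case 0 then show ?thesis by (simp add: top_term_def deg_le_def unit_vec_def)
next
  case (Suc l')
  have a: "lead_term (3 * Suc l' - 1) ((opOmega ^^ Suc l') (unit_vec (Mon 0 0 0 r s t))) (lcOmega (Suc l')) (Mon (Suc l') (Suc l') (Suc l') r s t)"
    by (rule lead_term_opOmega_pow)
  have low: "deg_le (3 * Suc l') ((opOmega ^^ Suc l') (unit_vec (Mon 0 0 0 r s t)))"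
    by (rule lead_term_deg_le[OF a]) simp_all
  have "\<And>m'. deg m' = 3 * Suc l' \<Longrightarrow> (opOmega ^^ Suc l') (unit_vec (Mon 0 0 0 r s t)) m' = (if m' = Mon (Suc l') (Suc l') (Suc l') r s t then lcOmega (Suc l') else 0)"
    by (rule lead_term_apply[OF a]) simp
  then show ?thesis using Suc low by (simp add: top_term_def)
qed

text \<open>\<open>omega_mon (Mon i j k r s t)\<close> is \<open>\<Omega>\<^sup>i \<alpha>\<^sup>r \<beta>\<^sup>s \<gamma>\<^sup>t\<close>; the exponents \<open>j, k\<close> are ignored.\<close>

definition omega_mon :: "mon \<Rightarrow> 'a ncpoly" where
  "omega_mon m = (case m of Mon i j k r s t \<Rightarrow> nc_pow (aw_Omega q) i \<otimes> (nc_pow (aw_alpha q) r \<otimes> (nc_pow (aw_beta q) s \<otimes> nc_pow (aw_gamma q) t)))"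

lemma fin_omega_mon[simp]: "fin (omega_mon m)" by (cases m) (simp add: omega_mon_def)

lemma rho_nc_pow_Omega: "vfin w \<Longrightarrow> rho (nc_pow (aw_Omega q) n) w = (opOmega ^^ n) w"
proof (induction n)
  case 0 then show ?case by (simp add: rho_one)
next
  case (Suc n)
  then show ?case by (simp add: rho_mult rho_Omega)
qed

lemma pbw_coords_omega_mon: "pbw_coords (omega_mon (Mon i j k r s t)) = (opOmega ^^ i) (unit_vec (Mon 0 0 0 r s t))"
  by (simp add: omega_mon_def pbw_coords_def rho_mult rho_nc_pow_Omega rho_nc_pow_alpha rho_nc_pow_beta rho_nc_pow_gamma shift_op_shift_op push_unit_vec inj_central_shift)

lemma gen_subalg_omega_mon: "omega_mon m \<in> gen_subalg q"
  by (cases m) (simp add: omega_mon_def gen_subalg.mult gen_subalg_nc_pow gen_subalg.Om gen_subalg.al gen_subalg.be gen_subalg.ga)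

end

section \<open>Central elements\<close>

locale aw_generic = aw +
  assumes nru: "\<forall>n::nat. n > 0 \<longrightarrow> q ^ n \<noteq> 1"
begin

lemma q2_power_inj: assumes "(q^2)^j = (q^2)^k" shows "j = k"
proof -
  have "(q^2)^a \<noteq> (q^2)^b" if "a < b" for a b
  proof
    assume "(q^2)^a = (q^2)^b"
    moreover have "(q^2)^b = (q^2)^a * q ^ (2 * (b - a))"
      using that by (metis le_add_diff_inverse less_imp_le power_add power_mult)
    ultimately have "q ^ (2 * (b - a)) = 1" using q0 by simp
    moreover have "2 * (b - a) > 0" using that by simp
    ultimately show False using nru by blast
  qed
  then show ?thesis using assms by (metis linorder_neqE_nat)
qed

lemma center_top_mon_diagonal: assumes x: "x \<in> aw_center q" and low: "deg_le n (pbw_coords x)"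
  and nz: "pbw_coords x (Mon i j k r s t) \<noteq> 0" and dn: "i + j + k = n"
  shows "j = i \<and> k = j"
proof
  have "lcC i j = 1" by (rule center_top_C[OF assms])
  then have "(q^2)^j = (q^2)^i" using q0 by (simp add: lcC_def power_mult field_simps)
       (simp add: power_mult[symmetric] mult.commute)
  then show "j = i" by (rule q2_power_inj)
  have "inverse (q^2) ^ k * (q^2) ^ j = 1" by (rule center_top_A[OF assms])
  then have "(q^2)^j = (q^2)^k" using q0 by (simp add: power_inverse field_simps)
  then show "k = j" by (metis q2_power_inj)
qed

lemma center_top_omega_mon:
  assumes x: "x \<in> aw_center q" and low: "deg_le n (pbw_coords x)"
    and nz: "pbw_coords x m \<noteq> 0" and dm: "deg m = n"
  shows "top_term n (pbw_coords (omega_mon m)) (lcOmega (exp_A m)) m"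
proof -
  obtain i j k r s t where m: "m = Mon i j k r s t" by (cases m)
  then have "j = i \<and> k = j" using center_top_mon_diagonal[OF x low] nz dm by auto
  moreover from this have "n = 3 * i" using m dm by simp
  ultimately show ?thesis using top_term_opOmega_pow[of i r s t] m by (simp add: pbw_coords_omega_mon)
qed

lemma center_reduce_degree:
  assumes x: "x \<in> aw_center q" and low: "deg_le n (pbw_coords x)"
  obtains s where "s \<in> gen_subalg q" and "\<And>m. n \<le> deg m \<Longrightarrow> pbw_coords (x - s) m = 0"
proof -
  let ?v = "pbw_coords x" and ?T = "{m. pbw_coords x m \<noteq> 0 \<and> deg m = n}"
  define s where "s = (\<Sum>m\<in>?T. (?v m * inverse (lcOmega (exp_A m))) \<cdot> omega_mon m)"
  have sS: "s \<in> gen_subalg q"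
    unfolding s_def by (intro gen_subalg_sum gen_subalg_smult gen_subalg_omega_mon)
  have coords: "pbw_coords (x - s) =
      ?v - (\<Sum>m\<in>?T. vscale (?v m * inverse (lcOmega (exp_A m))) (pbw_coords (omega_mon m)))"
    using aw_center_fin[OF x] by (simp add: s_def pbw_coords_diff pbw_coords_sum pbw_coords_smult)
  have top: "top_term n (pbw_coords (omega_mon m)) (lcOmega (exp_A m)) m \<and> lcOmega (exp_A m) \<noteq> 0"
    if "?v m \<noteq> 0" "deg m = n" for m
    using center_top_omega_mon[OF x low that] lcOmega_nonzero by blast
  show ?thesis
  proof (rule that[OF sS])
    fix m assume "n \<le> deg m"
    then show "pbw_coords (x - s) m = 0"
      unfolding coords using top_term_cancel[OF vfin_pbw_coords low top] by blast
  qed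
qed

lemma center_mod_ideal_in_gen_subalg:
  assumes "x \<in> aw_center q" and "\<And>m. n \<le> deg m \<Longrightarrow> pbw_coords x m = 0"
  shows "\<exists>s\<in>gen_subalg q. x - s \<in> aw_ideal q"
  using assms
proof (induction n arbitrary: x)
  case 0
  then have "pbw_coords x = 0" by (auto simp: fun_eq_iff)
  then have "x \<in> aw_ideal q" using aw_ideal_iff_pbw_coords aw_center_fin[OF "0.prems"(1)] by blast
  then show ?case using gen_subalg_zero by force
next
  case (Suc n)
  have "deg_le n (pbw_coords x)"
    using Suc.prems(2) by (auto simp: deg_le_def) (meson not_less_eq_eq)
  then obtain s where s: "s \<in> gen_subalg q" "\<And>m. n \<le> deg m \<Longrightarrow> pbw_coords (x - s) m = 0"
    using center_reduce_degree[OF Suc.prems(1)] by blast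
  have "x - s \<in> aw_center q" using aw_center_diff[OF Suc.prems(1) gen_subalg_center[OF s(1)]] .
  then obtain s' where "s' \<in> gen_subalg q" "x - s - s' \<in> aw_ideal q" using Suc.IH s(2) by blast
  then show ?case using gen_subalg_add[OF s(1)] by (metis diff_diff_eq)
qed

end

theorem corollary8p3:
  fixes q :: "'a::field"
  assumes "q \<noteq> 0" and "q ^ 4 \<noteq> 1"
    and "\<forall>n::nat. n > 0 \<longrightarrow> q ^ n \<noteq> 1"
  shows "aw_center q = {x. fin x \<and> (\<exists>s\<in>gen_subalg q. x \<ominus> s \<in> aw_ideal q)}"
proof -
  interpret aw_generic q using assms by unfold_locales auto
  show ?thesis
  proof (intro set_eqI iffI)
    fix x assume x: "x \<in> aw_center q"
    obtain n where "\<And>m. n \<le> deg m \<Longrightarrow> pbw_coords x m = 0"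
      using vfin_deg_bound[OF vfin_pbw_coords[of x]] by blast
    then show "x \<in> {x. fin x \<and> (\<exists>s\<in>gen_subalg q. x \<ominus> s \<in> aw_ideal q)}"
      using center_mod_ideal_in_gen_subalg[OF x] aw_center_fin[OF x] by auto
  next
    fix x assume "x \<in> {x. fin x \<and> (\<exists>s\<in>gen_subalg q. x \<ominus> s \<in> aw_ideal q)}"
    then obtain s where "s \<in> gen_subalg q" and "x - s \<in> aw_ideal q" by auto
    then have "(x - s) + s \<in> aw_center q" by (intro aw_center_add aw_ideal_center gen_subalg_center)
    then show "x \<in> aw_center q" by simp
  qed
qed

end
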